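(* In the setting described in the context, assume the problem is mildly ill-posed, i.e. $a_k\asymp k^{-p}$ as $k\to\infty$ for some $p>0$, let $\beta>0$ with $\beta+p>1/2$, and take the prior variances $\lambda_k=\rho_n^2k^{-1-2\alpha}$ with $\alpha>0$ and any positive sequence $\rho_n$ with $\rho_n^2n\to\infty$. Then for any $K>0$ and any sequence $M_n\to\infty$, \[\sup_{f_0\in S^\beta:\|f_0\|_\beta\le K}\mathbb{E}_{f_0}\Pi_n\big(f:\|f-f_0\|_{H_1}\ge M_n\varepsilon_n\mid U^n\big)\to 0,\] where \[\varepsilon_n=\varepsilon_{n,1}\vee\varepsilon_{n,2}=(\rho_n^2n)^{-\beta/(2\alpha+2p+1)\wedge 1}\vee \rho_n(\rho_n^2n)^{-\alpha/(2\alpha+2p+1)}.\] In particular: (i) if $\rho_n=1$, then $\varepsilon_n=n^{-(\alpha\wedge\beta)/(2\alpha+2p+1)}$; (ii) if $\beta\le 2\alpha+2p+1$ and $\rho_n\asymp n^{(\alpha-\beta)/(2\beta+2p+1)}$, then $\varepsilon_n=n^{-\beta/(2\beta+2p+1)}$; (iii) if $\beta>2\alpha+2p+1$, then for every scaling $\rho_n$, $\varepsilon_n\gg n^{-\beta/(2\beta+2p+1)}$.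
   Context: Let $H_1,H_2\subset L^2([0,1])$ be Hilbert spaces of functions on $[0,1]$ and $A:H_1\to H_2$ an injective compact linear operator. Let $\{\varphi_k\}_{k\ge1}$ be an orthonormal eigenbasis of $A^*A$ in $H_1$, $A^*A\varphi_k=a_k^2\varphi_k$ with $a_k>0$, and let $\psi_k:=A\varphi_k/a_k$ (an orthonormal system, $A\varphi_k=a_k\psi_k$). For $f\in H_1$ write $f_k=\langle f,\varphi_k\rangle$, identify $f$ with $(f_k)_k$, so $\|f\|_{H_1}^2=\sum_kf_k^2$. For $\beta\ge0$, $S^\beta$ is the set of $f=\sum_kf_k\varphi_k$ with $\|f\|_\beta:=(\sum_k f_k^2k^{2\beta})^{1/2}<\infty$. Observations: for $n\ge2$, design points $x_i=i/n$, and $Y_i=Af(x_i)+\xi_i$, $i=1,\dots,n$, with $\xi_i$ i.i.d. $\mathcal N(0,1)$ ($Af$ continuous). Put $\langle g,h\rangle_d:=\frac1n\sum_{i=1}^ng(x_i)h(x_i)$. Standing assumption on the conjugate basis: (i) $\langle\psi_j,\psi_k\rangle_d=\delta_{jk}$ for $1\le j,k\le n-1$; (ii) for $1\le k\le n-1$ and fixed $l\in\mathbb N$, among $j\in\{ln,\dots,(l+1)n-1\}$ there is exactly one $\tilde j=ln+\bar k$ ($\bar k$ depending only on the parity of $l$) with $0<|\langle\psi_{\tilde j},\psi_k\rangle_d|<M$ for a fixed constant $M$, and $\langle\psi_j,\psi_k\rangle_d=0$ for all other such $j$. Transformed data: $U_k:=\frac1n\sum_{i=1}^nY_i\psi_k(x_i)$,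 $k=1,\dots,n-1$, $U^n=(U_1,\dots,U_{n-1})$; thus $U_k=a_kf_k+R_k(f)+\zeta_k/\sqrt n$ with $R_k(f)=\langle A\sum_{j\ge n}f_j\varphi_j,\psi_k\rangle_d$ and $\zeta_k=n^{-1/2}\sum_{i=1}^n\xi_i\psi_k(x_i)$. $\mathbb E_{f_0}$ (resp. $\mathbb P_{f_0}$) denotes expectation (probability) when the data are generated with $f=f_0$. Prior: $f_k\sim\mathcal N(0,\lambda_k)$ independently for $k<n$, $f_k=0$ for $k\ge n$, independent of the noise. The posterior is $\Pi_n(\cdot\mid U^n)=\bigotimes_{k\in\mathbb N}\mathcal N(\hat f_k,\sigma_k^2)$ (on coefficients) with $\hat f_k=\frac{na_k\lambda_k\mathbf 1\{k<n\}}{na_k^2\lambda_k+1}U_k$, $\sigma_k^2=\frac{\lambda_k\mathbf 1\{k<n\}}{na_k^2\lambda_k+1}$. Notation: $a\vee b=\max$, $a\wedge b=\min$; $a_n\lesssim b_n$ means $a_n\le Cb_n$ for a constant $C$; $a_n\asymp b_n$ means $a_n/b_n$ is bounded away from $0$ and $\infty$; $a_n\ll b_n$ means $a_n/b_n\to0$. *)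

theory Defs
  imports "HOL-Probability.Probability" "HOL-Library.Landau_Symbols"
begin

text \<open>Coefficients f = (f_k)_{k>=1} of an element of H_1 w.r.t. the eigenbasis phi_k
  (index 0 is unused). The conjugate functions psi_k are real functions on [0,1].\<close>

definition dip :: "nat \<Rightarrow> (real \<Rightarrow> real) \<Rightarrow> (real \<Rightarrow> real) \<Rightarrow> real" where
  "dip n g h = (\<Sum>i=1..n. g (real i / real n) * h (real i / real n)) / real n"

definition H1norm :: "(nat \<Rightarrow> real) \<Rightarrow> real" where
  "H1norm f = sqrt (infsum (\<lambda>k. (f k)\<^sup>2) {1..})"

definition inS :: "real \<Rightarrow> (nat \<Rightarrow> real) \<Rightarrow> bool" where
  "inS \<beta> f \<longleftrightarrow> (\<lambda>k. (f k)\<^sup>2) summable_on {1..} \<and>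
                 (\<lambda>k. (f k)\<^sup>2 * real k powr (2 * \<beta>)) summable_on {1..}"

definition Snorm :: "real \<Rightarrow> (nat \<Rightarrow> real) \<Rightarrow> real" where
  "Snorm \<beta> f = sqrt (infsum (\<lambda>k. (f k)\<^sup>2 * real k powr (2 * \<beta>)) {1..})"

text \<open>A f as a function: A f = sum_k a_k f_k psi_k (singular value decomposition).\<close>
definition Aop :: "(nat \<Rightarrow> real) \<Rightarrow> (nat \<Rightarrow> real \<Rightarrow> real) \<Rightarrow> (nat \<Rightarrow> real) \<Rightarrow> real \<Rightarrow> real" where
  "Aop a \<psi> f x = (\<Sum>j. a (Suc j) * f (Suc j) * \<psi> (Suc j) x)"

definition Udata :: "(nat \<Rightarrow> real) \<Rightarrow> (nat \<Rightarrow> real \<Rightarrow> real) \<Rightarrow> nat \<Rightarrow> (nat \<Rightarrow> real)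
                     \<Rightarrow> (nat \<Rightarrow> real) \<Rightarrow> nat \<Rightarrow> real" where
  "Udata a \<psi> n f0 \<xi> k =
     (\<Sum>i=1..n. (Aop a \<psi> f0 (real i / real n) + \<xi> i) * \<psi> k (real i / real n)) / real n"

definition gauss :: "real \<Rightarrow> real \<Rightarrow> real measure" where
  "gauss m v = (if v > 0 then density lborel (normal_density m (sqrt v)) else return lborel m)"

definition post_mean :: "(nat \<Rightarrow> real) \<Rightarrow> (nat \<Rightarrow> real) \<Rightarrow> nat \<Rightarrow> (nat \<Rightarrow> real) \<Rightarrow> nat \<Rightarrow> real" where
  "post_mean a lam n U k =
     (if k < n then real n * a k * lam k / (real n * (a k)\<^sup>2 * lam k + 1) * U k else 0)"

definition post_var :: "(nat \<Rightarrow> real) \<Rightarrow> (nat \<Rightarrow> real) \<Rightarrow> nat \<Rightarrow> nat \<Rightarrow> real" where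
  "post_var a lam n k = (if k < n then lam k / (real n * (a k)\<^sup>2 * lam k + 1) else 0)"

definition posterior :: "(nat \<Rightarrow> real) \<Rightarrow> (nat \<Rightarrow> real) \<Rightarrow> nat \<Rightarrow> (nat \<Rightarrow> real) \<Rightarrow> (nat \<Rightarrow> real) measure" where
  "posterior a lam n U = PiM {1..} (\<lambda>k. gauss (post_mean a lam n U k) (post_var a lam n k))"

definition noise :: "nat \<Rightarrow> (nat \<Rightarrow> real) measure" where
  "noise n = PiM {1..n} (\<lambda>_. density lborel std_normal_density)"

definition exp_post_prob :: "(nat \<Rightarrow> real) \<Rightarrow> (nat \<Rightarrow> real \<Rightarrow> real) \<Rightarrow> (nat \<Rightarrow> real) \<Rightarrow> nat
                             \<Rightarrow> (nat \<Rightarrow> real) \<Rightarrow> real \<Rightarrow> real" where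
  "exp_post_prob a \<psi> lam n f0 r =
     (\<integral>\<xi>. measure (posterior a lam n (Udata a \<psi> n f0 \<xi>))
              {f \<in> space (posterior a lam n (Udata a \<psi> n f0 \<xi>)). H1norm (\<lambda>k. f k - f0 k) \<ge> r}
        \<partial>noise n)"

end

theory Submission
  imports Defs
begin

(* The posterior is a product of Gaussians N(fhat_k, sigma_k^2), k < n, and point masses at 0 for
   k >= n.  Chebyshev's inequality bounds Pi_n(||f - f0|| >= r | U) by the posterior mean of
   ||f - f0||^2 over r^2, and averaging over the noise turns this into the risk
     sum_{k<n} [(c_k D_k - f0_k)^2 + c_k^2 / n + sigma_k^2] + sum_{k>=n} f0_k^2,
   where D_k is the noiseless transformed datum and c_k the posterior gain.
   By the discrete orthogonality of the psi_k, D_k = a_k f0_k + R_k, and since exactly one frequency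
   in each block [l n, (l+1) n) aliases onto k, weighting by j^(+-beta) gives |R_k| <~ n^-(p+beta)
   uniformly over the Sobolev ball.  Splitting the sums at k ~ (rho^2 n)^(1/(2 alpha+2p+1)) bounds
   the squared bias by eps_{n,1}^2 K^2 and the total posterior variance by eps_{n,2}^2, so the
   expected posterior mass is <~ 1 / M_n^2.  Statements (i)-(iii) are exponent calculations. *)

section \<open>Gaussian product measures\<close>

lemma prob_space_gauss: "prob_space (gauss m v)"
  unfolding gauss_def by (auto intro: prob_space_normal_density prob_space_return)

lemma sets_gauss [measurable_cong, simp]: "sets (gauss m v) = sets borel"
  unfolding gauss_def by auto

lemma space_gauss [simp]: "space (gauss m v) = UNIV"
  unfolding gauss_def by (auto simp: space_density)

lemma has_bochner_integral_gauss_square: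
  assumes "v \<ge> 0"
  shows "has_bochner_integral (gauss m v) (\<lambda>y. (y - c)\<^sup>2) (v + (m - c)\<^sup>2)"
proof (cases "v > 0")
  case True
  define s where "s = sqrt v"
  have s: "s > 0" using True by (simp add: s_def)
  have "(\<lambda>y. normal_density m s y * (y - c)\<^sup>2) = (\<lambda>y. normal_density m s y * (y - m) ^ (2 * 1)
      + 2 * (m - c) * (normal_density m s y * (y - m) ^ (2 * 0 + 1)) + (m - c)\<^sup>2 * normal_density m s y)"
    by (simp add: power2_eq_square algebra_simps)
  moreover have "has_bochner_integral lborel (\<lambda>y. normal_density m s y * (y - m) ^ (2 * 1)
      + 2 * (m - c) * (normal_density m s y * (y - m) ^ (2 * 0 + 1)) + (m - c)\<^sup>2 * normal_density m s y)
      (s\<^sup>2 + 2 * (m - c) * 0 + (m - c)\<^sup>2 * 1)"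
    using normal_moment_even[OF s, of m 1] normal_moment_odd[OF s, of m 0]
      integrable_normal_density[OF s] integral_normal_density[OF s]
    by (intro has_bochner_integral_add has_bochner_integral_mult_right)
       (auto simp: power2_eq_square has_bochner_integral_iff)
  ultimately show ?thesis
    using True s by (auto simp: gauss_def s_def normal_density_nonneg intro!: has_bochner_integral_density)
next
  case False
  then have "gauss m v = return lborel m" using assms by (simp add: gauss_def)
  moreover have "integrable (return lborel m) (\<lambda>y. (y - c)\<^sup>2)"
    by (rule integrable_cong_AE_imp[where g="\<lambda>_. (m - c)\<^sup>2"])
       (auto simp: AE_return prob_space_return prob_space.finite_measure finite_measure.integrable_const)
  ultimately show ?thesis
    using False assms by (simp add: has_bochner_integral_iff integral_return)
qed

lemma has_bochner_integral_PiM_gauss_square: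
  assumes "\<And>k. v k \<ge> 0" and "k \<ge> 1"
  shows "has_bochner_integral (PiM {1..} (\<lambda>k. gauss (m k) (v k))) (\<lambda>f. (f k - c)\<^sup>2) (v k + (m k - c)\<^sup>2)"
proof -
  let ?M = "PiM {1..} (\<lambda>k. gauss (m k) (v k))"
  have distr: "distr ?M (gauss (m k) (v k)) (\<lambda>f. f k) = gauss (m k) (v k)"
    using assms(2) by (intro distr_PiM_component) (auto simp: prob_space_gauss)
  have meas: "(\<lambda>f. f k) \<in> measurable ?M (gauss (m k) (v k))"
    using assms(2) by (intro measurable_component_singleton) auto
  show ?thesis
    using has_bochner_integral_gauss_square[of "v k" "m k" c] assms(1)
      integrable_distr_eq[OF meas, of "\<lambda>y. (y - c)\<^sup>2"] integral_distr[OF meas, of "\<lambda>y. (y - c)\<^sup>2"]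
    by (simp add: distr has_bochner_integral_iff)
qed

lemma H1norm_dist_square_eq:
  assumes f0: "(\<lambda>k. (f0 k)\<^sup>2) summable_on {1..}" and n: "n \<ge> 1" and f: "\<And>k. k \<ge> n \<Longrightarrow> f k = 0"
  shows "(H1norm (\<lambda>k. f k - f0 k))\<^sup>2 = (\<Sum>k\<in>{1..<n}. (f k - f0 k)\<^sup>2) + infsum (\<lambda>k. (f0 k)\<^sup>2) {n..}"
proof -
  have "(\<lambda>k. (f0 k)\<^sup>2) summable_on {n..}"
    using n by (intro summable_on_subset[OF f0]) auto
  then have tail: "(\<lambda>k. (f k - f0 k)\<^sup>2) summable_on {n..}"
    by (rule summable_on_cong[THEN iffD1, rotated]) (simp add: f)
  have "infsum (\<lambda>k. (f k - f0 k)\<^sup>2) {n..} = infsum (\<lambda>k. (f0 k)\<^sup>2) {n..}"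
    by (rule infsum_cong) (simp add: f)
  moreover have "{1..} = {1..<n} \<union> {n..}" using n by auto
  ultimately have "infsum (\<lambda>k. (f k - f0 k)\<^sup>2) {1..}
      = (\<Sum>k\<in>{1..<n}. (f k - f0 k)\<^sup>2) + infsum (\<lambda>k. (f0 k)\<^sup>2) {n..}"
    using tail by (simp only:) (subst infsum_Un_disjoint; auto simp: summable_on_finite infsum_finite)
  moreover have "infsum (\<lambda>k. (f k - f0 k)\<^sup>2) {1..} \<ge> 0" by (intro infsum_nonneg) auto
  ultimately show ?thesis unfolding H1norm_def by simp
qed

lemma AE_PiM_gauss_tail_zero:
  fixes m v :: "nat \<Rightarrow> real"
  assumes tail: "\<And>k. k \<ge> n \<Longrightarrow> m k = 0 \<and> v k = 0" and n: "n \<ge> 1"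
  shows "AE f in PiM {1..} (\<lambda>k. gauss (m k) (v k)). \<forall>k\<in>{n..}. f k = 0"
proof (rule AE_ball_countable')
  fix k assume "k \<in> {n..}"
  then have point_mass: "gauss (m k) (v k) = return lborel 0" using tail[of k] by (simp add: gauss_def)
  have "AE x in gauss (m k) (v k). x = 0" unfolding point_mass by (subst AE_return) auto
  then show "AE f in PiM {1..} (\<lambda>k. gauss (m k) (v k)). f k = 0"
    using \<open>k \<in> {n..}\<close> n
    by (intro AE_PiM_component[where M="\<lambda>k. gauss (m k) (v k)"]) (auto simp: prob_space_gauss)
qed simp

lemma PiM_gauss_H1_deviation_le:
  assumes v: "\<And>k. v k \<ge> 0" and tail: "\<And>k. k \<ge> n \<Longrightarrow> m k = 0 \<and> v k = 0"
    and r: "r > 0" and n: "n \<ge> 1" and f0: "(\<lambda>k. (f0 k)\<^sup>2) summable_on {1..}"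
  shows "measure (PiM {1..} (\<lambda>k. gauss (m k) (v k)))
      {f \<in> space (PiM {1..} (\<lambda>k. gauss (m k) (v k))). H1norm (\<lambda>k. f k - f0 k) \<ge> r}
     \<le> ((\<Sum>k\<in>{1..<n}. (m k - f0 k)\<^sup>2 + v k) + infsum (\<lambda>k. (f0 k)\<^sup>2) {n..}) / r\<^sup>2"
proof -
  let ?M = "PiM {1..} (\<lambda>k. gauss (m k) (v k))"
  define T where "T = infsum (\<lambda>k. (f0 k)\<^sup>2) {n..}"
  define g where "g f = (\<Sum>k\<in>{1..<n}. (f k - f0 k)\<^sup>2) + T" for f :: "nat \<Rightarrow> real"
  interpret prob_space ?M by (intro prob_space_PiM) (auto simp: prob_space_gauss)
  have g_meas [measurable]: "g \<in> borel_measurable ?M"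
    unfolding g_def by measurable
  have "has_bochner_integral ?M (\<lambda>_. T) T"
    using integrable_const[of T] prob_space by (simp add: has_bochner_integral_iff)
  then have "has_bochner_integral ?M g ((\<Sum>k\<in>{1..<n}. v k + (m k - f0 k)\<^sup>2) + T)"
    unfolding g_def
    by (intro has_bochner_integral_add has_bochner_integral_sum has_bochner_integral_PiM_gauss_square v) auto
  then have g_int: "integrable ?M g"
    and g_val: "(\<integral>f. g f \<partial>?M) = (\<Sum>k\<in>{1..<n}. (m k - f0 k)\<^sup>2 + v k) + T"
    by (auto simp: has_bochner_integral_iff add.commute)
  have g_nonneg: "g f \<ge> 0" for f
    unfolding g_def T_def by (intro add_nonneg_nonneg sum_nonneg infsum_nonneg) auto
  have "AE f in ?M. \<forall>k\<in>{n..}. f k = 0" by (rule AE_PiM_gauss_tail_zero) (use tail n in auto)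
  then have "AE f in ?M. f \<in> {f \<in> space ?M. H1norm (\<lambda>k. f k - f0 k) \<ge> r}
      \<longrightarrow> f \<in> {f \<in> space ?M. g f \<ge> r\<^sup>2}"
  proof eventually_elim
    case (elim f)
    show ?case
      using H1norm_dist_square_eq[OF f0 n, of f] elim r power_mono[of r "H1norm (\<lambda>k. f k - f0 k)" 2]
      by (auto simp: g_def T_def)
  qed
  then have "measure ?M {f \<in> space ?M. H1norm (\<lambda>k. f k - f0 k) \<ge> r}
      \<le> measure ?M {f \<in> space ?M. g f \<ge> r\<^sup>2}"
    by (rule finite_measure_mono_AE) measurable
  also have "\<dots> \<le> (\<integral>f. g f \<partial>?M) / r\<^sup>2"
    using g_int r g_nonneg by (intro integral_Markov_inequality_measure[where A="space ?M"]) auto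
  finally show ?thesis unfolding g_val T_def .
qed

section \<open>Moments of the noise\<close>

lemma has_bochner_integral_std_normal_power:
  "has_bochner_integral std_normal_distribution (\<lambda>x. x ^ k)
     (if odd k then 0 else fact k / (2 ^ (k div 2) * fact (k div 2)))"
proof (cases "odd k")
  case True
  then obtain j where "k = 2 * j + 1" by (auto elim: oddE)
  then show ?thesis
    using std_normal_moment_odd[of j] by (auto intro!: has_bochner_integral_density)
next
  case False
  then obtain j where "k = 2 * j" by (auto elim: evenE)
  then show ?thesis
    using std_normal_moment_even[of j] by (auto intro!: has_bochner_integral_density)
qed

lemma has_bochner_integral_noise_prod:
  fixes g :: "nat \<Rightarrow> real \<Rightarrow> real"
  assumes "\<And>t. t \<in> {1..n} \<Longrightarrow> has_bochner_integral std_normal_distribution (g t) (c t)"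
  shows "has_bochner_integral (noise n) (\<lambda>\<xi>. \<Prod>t\<in>{1..n}. g t (\<xi> t)) (\<Prod>t\<in>{1..n}. c t)"
proof -
  interpret product_sigma_finite "\<lambda>_::nat. std_normal_distribution"
    by (simp add: product_sigma_finite_def prob_space_imp_sigma_finite prob_space_normal_density)
  have int: "\<And>t. t \<in> {1..n} \<Longrightarrow> integrable std_normal_distribution (g t)"
    and val: "\<And>t. t \<in> {1..n} \<Longrightarrow> integral\<^sup>L std_normal_distribution (g t) = c t"
    using assms by (auto simp: has_bochner_integral_iff)
  have "integrable (noise n) (\<lambda>\<xi>. \<Prod>t\<in>{1..n}. g t (\<xi> t))"
    unfolding noise_def by (rule product_integrable_prod) (auto simp: int)
  moreover have "(\<integral>\<xi>. (\<Prod>t\<in>{1..n}. g t (\<xi> t)) \<partial>noise n) = (\<Prod>t\<in>{1..n}. c t)"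
    unfolding noise_def by (subst product_integral_prod) (auto simp: int val)
  ultimately show ?thesis by (simp add: has_bochner_integral_iff)
qed

lemma has_bochner_integral_noise_monomial:
  "has_bochner_integral (noise n) (\<lambda>\<xi>. \<Prod>t\<in>{1..n}. \<xi> t ^ e t)
     (\<Prod>t\<in>{1..n}. if odd (e t) then 0 else fact (e t) / (2 ^ (e t div 2) * fact (e t div 2)))"
  by (intro has_bochner_integral_noise_prod has_bochner_integral_std_normal_power)

lemma has_bochner_integral_noise_mean:
  assumes "i \<in> {1..n}"
  shows "has_bochner_integral (noise n) (\<lambda>\<xi>. \<xi> i) 0"
proof -
  define e where "e t = (if t = i then 1 else (0::nat))" for t
  have monomial: "(\<lambda>\<xi>::nat \<Rightarrow> real. \<Prod>t\<in>{1..n}. \<xi> t ^ e t) = (\<lambda>\<xi>. \<xi> i)"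
    using assms by (simp add: fun_eq_iff e_def if_distrib[of "\<lambda>e. _ ^ e"] prod.delta cong: if_cong)
  have moment: "(\<Prod>t\<in>{1..n}. if odd (e t) then 0 else fact (e t) / (2 ^ (e t div 2) * fact (e t div 2)))
      = (0::real)"
    using assms by (auto simp: e_def prod_zero_iff)
  show ?thesis
    using has_bochner_integral_noise_monomial[of n e] unfolding monomial moment .
qed

lemma has_bochner_integral_noise_covariance:
  assumes "i \<in> {1..n}" and "j \<in> {1..n}"
  shows "has_bochner_integral (noise n) (\<lambda>\<xi>. \<xi> i * \<xi> j) (if i = j then 1 else 0)"
proof -
  define e where "e t = (if t = i then 1 else 0) + (if t = j then 1 else (0::nat))" for t
  have monomial: "(\<lambda>\<xi>::nat \<Rightarrow> real. \<Prod>t\<in>{1..n}. \<xi> t ^ e t) = (\<lambda>\<xi>. \<xi> i * \<xi> j)"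
    using assms by (simp add: fun_eq_iff e_def power_add prod.distrib if_distrib[of "\<lambda>e. _ ^ e"] prod.delta cong: if_cong)
  have moment: "(\<Prod>t\<in>{1..n}. if odd (e t) then 0 else fact (e t) / (2 ^ (e t div 2) * fact (e t div 2)))
      = (if i = j then 1 else (0::real))"
    using assms by (auto simp: e_def prod_zero_iff intro!: prod.neutral)
  show ?thesis
    using has_bochner_integral_noise_monomial[of n e] unfolding monomial moment .
qed

lemma prob_space_noise: "prob_space (noise n)"
  unfolding noise_def by (intro prob_space_PiM) (auto simp: prob_space_normal_density)

lemma has_bochner_integral_noise_affine_square:
  fixes w :: "nat \<Rightarrow> real"
  shows "has_bochner_integral (noise n) (\<lambda>\<xi>. (b + (\<Sum>i\<in>{1..n}. w i * \<xi> i))\<^sup>2)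
           (b\<^sup>2 + (\<Sum>i\<in>{1..n}. (w i)\<^sup>2))"
proof -
  interpret prob_space "noise n" by (rule prob_space_noise)
  have expand: "(\<lambda>\<xi>. (b + (\<Sum>i\<in>{1..n}. w i * \<xi> i))\<^sup>2) = (\<lambda>\<xi>. b\<^sup>2 + (\<Sum>i\<in>{1..n}. (2 * b * w i) * \<xi> i)
      + (\<Sum>i\<in>{1..n}. \<Sum>j\<in>{1..n}. (w i * w j) * (\<xi> i * \<xi> j)))"
    by (simp add: fun_eq_iff power2_eq_square algebra_simps sum_distrib_left sum_distrib_right
        sum.distrib sum_product)
  have diagonal: "(\<Sum>i\<in>{1..n}. \<Sum>j\<in>{1..n}. w i * w j * (if i = j then 1 else 0)) = (\<Sum>i\<in>{1..n}. (w i)\<^sup>2)"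
    by (simp add: power2_eq_square if_distrib[of "\<lambda>x. _ * x"] cong: if_cong)
  have "has_bochner_integral (noise n) (\<lambda>_. b\<^sup>2) (b\<^sup>2)"
    using prob_space by (simp add: has_bochner_integral_iff)
  then have "has_bochner_integral (noise n) (\<lambda>\<xi>. b\<^sup>2 + (\<Sum>i\<in>{1..n}. (2 * b * w i) * \<xi> i)
      + (\<Sum>i\<in>{1..n}. \<Sum>j\<in>{1..n}. (w i * w j) * (\<xi> i * \<xi> j)))
      (b\<^sup>2 + (\<Sum>i\<in>{1..n}. 2 * b * w i * 0) + (\<Sum>i\<in>{1..n}. \<Sum>j\<in>{1..n}. w i * w j * (if i = j then 1 else 0)))"
    by (intro has_bochner_integral_add has_bochner_integral_sum has_bochner_integral_mult_right
        has_bochner_integral_noise_mean has_bochner_integral_noise_covariance) auto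
  then show ?thesis unfolding expand diagonal by simp
qed

section \<open>Expected posterior mass and posterior risk\<close>

definition post_gain :: "(nat \<Rightarrow> real) \<Rightarrow> (nat \<Rightarrow> real) \<Rightarrow> nat \<Rightarrow> nat \<Rightarrow> real" where
  "post_gain a lam n k = real n * a k * lam k / (real n * (a k)\<^sup>2 * lam k + 1)"

text \<open>The expected squared \<open>H\<^sub>1\<close>-distance between a posterior draw and \<open>f0\<close>: squared bias and
  noise variance of the posterior mean, posterior variance, and the truncation error \<open>\<Sum>\<^sub>k\<^sub>\<ge>\<^sub>n f0\<^sub>k\<^sup>2\<close>.\<close>
definition post_risk :: "(nat \<Rightarrow> real) \<Rightarrow> (nat \<Rightarrow> real \<Rightarrow> real) \<Rightarrow> (nat \<Rightarrow> real) \<Rightarrow> nat \<Rightarrow> (nat \<Rightarrow> real) \<Rightarrow> real"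
  where "post_risk a \<psi> lam n f0 =
    (\<Sum>k\<in>{1..<n}. (post_gain a lam n k * Udata a \<psi> n f0 (\<lambda>_. 0) k - f0 k)\<^sup>2
        + (post_gain a lam n k)\<^sup>2 / n + post_var a lam n k)
    + infsum (\<lambda>k. (f0 k)\<^sup>2) {n..}"

lemma Udata_eq_noiseless_plus_noise:
  "Udata a \<psi> n f0 \<xi> k = Udata a \<psi> n f0 (\<lambda>_. 0) k + (\<Sum>i\<in>{1..n}. \<psi> k (real i / real n) / real n * \<xi> i)"
  unfolding Udata_def by (simp add: algebra_simps sum.distrib sum_divide_distrib add_divide_distrib)

lemma has_bochner_integral_post_mean_sq_error:
  assumes k: "k \<in> {1..<n}" and unit: "dip n (\<psi> k) (\<psi> k) = 1"
  shows "has_bochner_integral (noise n) (\<lambda>\<xi>. (post_mean a lam n (Udata a \<psi> n f0 \<xi>) k - f0 k)\<^sup>2)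
    ((post_gain a lam n k * Udata a \<psi> n f0 (\<lambda>_. 0) k - f0 k)\<^sup>2 + (post_gain a lam n k)\<^sup>2 / n)"
proof -
  let ?c = "post_gain a lam n k"
  define w where "w i = ?c * \<psi> k (real i / real n) / real n" for i
  have mean: "post_mean a lam n (Udata a \<psi> n f0 \<xi>) k = ?c * Udata a \<psi> n f0 \<xi> k" for \<xi>
    using k by (simp add: post_mean_def post_gain_def)
  have error: "post_mean a lam n (Udata a \<psi> n f0 \<xi>) k - f0 k
      = (?c * Udata a \<psi> n f0 (\<lambda>_. 0) k - f0 k) + (\<Sum>i\<in>{1..n}. w i * \<xi> i)" for \<xi>
    unfolding mean Udata_eq_noiseless_plus_noise[of a \<psi> n f0 \<xi>]
    by (simp add: w_def algebra_simps sum_distrib_left)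
  have variance: "(\<Sum>i\<in>{1..n}. (w i)\<^sup>2) = ?c\<^sup>2 / n"
  proof -
    have "(\<Sum>i\<in>{1..n}. (w i)\<^sup>2)
        = ?c\<^sup>2 / (real n)\<^sup>2 * (\<Sum>i\<in>{1..n}. \<psi> k (real i / real n) * \<psi> k (real i / real n))"
      unfolding w_def by (simp add: sum_distrib_left power2_eq_square algebra_simps)
    also have "(\<Sum>i\<in>{1..n}. \<psi> k (real i / real n) * \<psi> k (real i / real n)) = real n"
      using unit k unfolding dip_def by (simp add: divide_eq_1_iff)
    finally show ?thesis by (simp add: power2_eq_square)
  qed
  show ?thesis
    unfolding error variance[symmetric] by (rule has_bochner_integral_noise_affine_square)
qed

lemma exp_post_prob_le_post_risk:
  assumes n: "n \<ge> 1" and r: "r > 0" and lam: "\<And>k. lam k \<ge> 0"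
    and f0: "(\<lambda>k. (f0 k)\<^sup>2) summable_on {1..}"
    and unit: "\<And>k. k \<in> {1..<n} \<Longrightarrow> dip n (\<psi> k) (\<psi> k) = 1"
  shows "exp_post_prob a \<psi> lam n f0 r \<le> post_risk a \<psi> lam n f0 / r\<^sup>2"
proof -
  interpret prob_space "noise n" by (rule prob_space_noise)
  define T where "T = infsum (\<lambda>k. (f0 k)\<^sup>2) {n..}"
  define h where "h \<xi> = ((\<Sum>k\<in>{1..<n}. (post_mean a lam n (Udata a \<psi> n f0 \<xi>) k - f0 k)\<^sup>2
      + post_var a lam n k) + T) / r\<^sup>2" for \<xi>
  have post_var_nonneg: "post_var a lam n k \<ge> 0" for k
    using lam[of k] by (simp add: post_var_def add_nonneg_pos)
  have h_nonneg: "h \<xi> \<ge> 0" for \<xi>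
    unfolding h_def T_def using post_var_nonneg
    by (intro divide_nonneg_nonneg add_nonneg_nonneg sum_nonneg infsum_nonneg) auto
  have "has_bochner_integral (noise n) (\<lambda>_. c) c" for c :: real
    using prob_space by (simp add: has_bochner_integral_iff)
  then have "has_bochner_integral (noise n) h (post_risk a \<psi> lam n f0 / r\<^sup>2)"
    unfolding h_def post_risk_def T_def
    by (intro has_bochner_integral_divide_zero has_bochner_integral_add has_bochner_integral_sum
        has_bochner_integral_post_mean_sq_error unit) auto
  then have "integrable (noise n) h" and "(\<integral>\<xi>. h \<xi> \<partial>noise n) = post_risk a \<psi> lam n f0 / r\<^sup>2"
    by (auto simp: has_bochner_integral_iff)
  moreover have "measure (posterior a lam n (Udata a \<psi> n f0 \<xi>))
      {f \<in> space (posterior a lam n (Udata a \<psi> n f0 \<xi>)). H1norm (\<lambda>k. f k - f0 k) \<ge> r} \<le> h \<xi>" for \<xi>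
    unfolding posterior_def h_def T_def
    by (rule PiM_gauss_H1_deviation_le) (use post_var_nonneg r n f0 in \<open>auto simp: post_mean_def post_var_def\<close>)
  ultimately show ?thesis
    unfolding exp_post_prob_def using h_nonneg integral_mono'[of "noise n" h] by simp
qed

section \<open>Aliasing\<close>

lemma abs_mult_le_amgm:
  fixes x y t :: real
  assumes "t > 0"
  shows "\<bar>x * y\<bar> \<le> (t * x\<^sup>2 + y\<^sup>2 / t) / 2"
proof -
  have "0 \<le> (t * \<bar>x\<bar> - \<bar>y\<bar>)\<^sup>2" by simp
  then have "2 * t * \<bar>x * y\<bar> \<le> t\<^sup>2 * x\<^sup>2 + y\<^sup>2"
    by (simp add: power2_eq_square algebra_simps abs_mult)
  then show ?thesis using assms by (simp add: field_simps power2_eq_square)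
qed

lemma sums_Udata_noiseless:
  assumes "\<And>x. x \<in> {0..1} \<Longrightarrow> summable (\<lambda>j. a (Suc j) * f0 (Suc j) * \<psi> (Suc j) x)"
  shows "(\<lambda>j. a (Suc j) * f0 (Suc j) * dip n (\<psi> (Suc j)) (\<psi> k)) sums Udata a \<psi> n f0 (\<lambda>_. 0) k"
proof -
  have "(\<lambda>j. (\<Sum>i\<in>{1..n}. a (Suc j) * f0 (Suc j) * \<psi> (Suc j) (real i / real n) * \<psi> k (real i / real n)) / real n)
      sums ((\<Sum>i\<in>{1..n}. Aop a \<psi> f0 (real i / real n) * \<psi> k (real i / real n)) / real n)"
  proof (intro sums_divide sums_sum sums_mult2)
    fix i assume "i \<in> {1..n}"
    then have "real i / real n \<in> {0..1}" by auto
    then show "(\<lambda>j. a (Suc j) * f0 (Suc j) * \<psi> (Suc j) (real i / real n)) sums Aop a \<psi> f0 (real i / real n)"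
      unfolding Aop_def by (intro summable_sums assms)
  qed
  then show ?thesis
    unfolding dip_def Udata_def by (simp add: sum_distrib_left mult.assoc)
qed

lemma sums_block_sparse:
  fixes g :: "nat \<Rightarrow> real"
  assumes sums: "(\<lambda>j. g (Suc j)) sums D" and n: "n \<ge> 1"
    and J: "\<And>l. l \<ge> 1 \<Longrightarrow> J l \<in> {l * n..<(l + 1) * n}"
    and sparse: "\<And>l j. l \<ge> 1 \<Longrightarrow> j \<in> {l * n..<(l + 1) * n} \<Longrightarrow> j \<noteq> J l \<Longrightarrow> g j = 0"
  shows "(\<lambda>l. g (J (Suc l))) sums (D - (\<Sum>j\<in>{1..<n}. g j))"
proof -
  have "(\<lambda>i. g (Suc (i + (n - 1)))) sums (D - (\<Sum>i<n - 1. g (Suc i)))"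
    using sums_split_initial_segment[OF sums, of "n - 1"] by simp
  moreover have "(\<Sum>i<n - 1. g (Suc i)) = (\<Sum>j\<in>{1..<n}. g j)"
    using n by (simp add: sum.atLeast1_atMost_eq[symmetric] atLeastLessThanSuc_atLeastAtMost[symmetric])
  ultimately have tail: "(\<lambda>i. g (i + n)) sums (D - (\<Sum>j\<in>{1..<n}. g j))"
    using n by (simp add: Suc_diff_le)
  have "(\<Sum>i\<in>{l * n..<l * n + n}. g (i + n)) = g (J (Suc l))" for l
  proof -
    have "(\<Sum>i\<in>{l * n..<l * n + n}. g (i + n)) = (\<Sum>j\<in>{Suc l * n..<(Suc l + 1) * n}. g j)"
      by (subst sum.shift_bounds_nat_ivl[symmetric]) (simp add: algebra_simps)
    also have "\<dots> = g (J (Suc l))"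
      using J[of "Suc l"] sparse[of "Suc l"] by (subst sum.mono_neutral_right[where S="{J (Suc l)}"]) auto
    finally show ?thesis .
  qed
  then show ?thesis using sums_group[OF tail, of n] n by simp
qed

lemma abs_sums_le:
  fixes g B :: "nat \<Rightarrow> real"
  assumes "g sums s" and "B sums b" and "\<And>l. \<bar>g l\<bar> \<le> B l"
  shows "\<bar>s\<bar> \<le> b"
proof -
  have "summable (\<lambda>l. norm (g l))"
    by (rule summable_comparison_test'[OF sums_summable[OF assms(2)], where N=0]) (simp add: assms(3))
  then have "\<bar>s\<bar> \<le> (\<Sum>l. \<bar>g l\<bar>)"
    using summable_norm sums_unique[OF assms(1)] by fastforce
  also have "\<dots> \<le> (\<Sum>l. B l)"
    using \<open>summable (\<lambda>l. norm (g l))\<close> sums_summable[OF assms(2)] assms(3) by (intro suminf_le) auto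
  finally show ?thesis using sums_unique[OF assms(2)] by simp
qed

lemma summable_comp_le_infsum:
  fixes h :: "nat \<Rightarrow> real"
  assumes J: "strict_mono J" "\<And>l. J l \<ge> 1"
    and h: "\<And>k. h k \<ge> 0" "h summable_on {1..}"
  shows "summable (\<lambda>l. h (J l))" and "(\<Sum>l. h (J l)) \<le> infsum h {1..}"
proof -
  have inj: "inj J" using J(1) by (rule strict_mono_imp_inj_on)
  have range: "range J \<subseteq> {1..}" using J(2) by auto
  have "(\<lambda>l. h (J l)) summable_on UNIV"
    using summable_on_subset[OF h(2) range] summable_on_reindex[OF inj, where g=h] by (simp add: comp_def)
  then show summable: "summable (\<lambda>l. h (J l))"
    using h(1) by (simp add: summable_on_UNIV_nonneg_real_iff)
  have "(\<Sum>l. h (J l)) = infsum (\<lambda>l. h (J l)) UNIV"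
    using sums_nonneg_imp_has_sum[OF summable_sums[OF summable]] h(1) by (simp add: infsumI)
  also have "\<dots> = infsum h (range J)" using infsum_reindex[OF inj, of h] by (simp add: comp_def)
  also have "\<dots> \<le> infsum h {1..}"
    using range h summable_on_subset[OF h(2) range] by (intro infsum_mono_neutral) auto
  finally show "(\<Sum>l. h (J l)) \<le> infsum h {1..}" .
qed

lemma abs_mult_le_split_weight:
  fixes A F t c m w p \<beta> :: real
  assumes t: "t > 0" and m: "0 < m" "m \<le> w" and A: "\<bar>A\<bar> \<le> c * w powr (-p)" and s: "p + \<beta> \<ge> 0"
  shows "\<bar>A * F\<bar> \<le> (t * (F\<^sup>2 * w powr (2 * \<beta>)) + c\<^sup>2 * m powr (-(2 * p + 2 * \<beta>)) / t) / 2"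
proof -
  have w: "w > 0" using m by simp
  have "0 \<le> c * w powr (-p)" using A abs_ge_zero order_trans by blast
  then have c: "c \<ge> 0" using w by (simp add: zero_le_mult_iff)
  have "\<bar>A * F\<bar> = \<bar>(F * w powr \<beta>) * (A * w powr (-\<beta>))\<bar>"
    using w by (simp add: powr_minus field_simps)
  also have "\<dots> \<le> (t * (F * w powr \<beta>)\<^sup>2 + (A * w powr (-\<beta>))\<^sup>2 / t) / 2"
    by (rule abs_mult_le_amgm[OF t])
  also have "(F * w powr \<beta>)\<^sup>2 = F\<^sup>2 * w powr (2 * \<beta>)"
    using w by (simp add: power_mult_distrib powr_realpow[symmetric] powr_powr mult.commute)
  also have "(A * w powr (-\<beta>))\<^sup>2 \<le> c\<^sup>2 * m powr (-(2 * p + 2 * \<beta>))"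
  proof -
    have "\<bar>A * w powr (-\<beta>)\<bar> \<le> c * w powr (-p) * w powr (-\<beta>)"
      using A by (simp add: abs_mult mult_right_mono)
    also have "\<dots> = c * w powr (-(p + \<beta>))" by (simp add: powr_add[symmetric] mult.assoc)
    also have "\<dots> \<le> c * m powr (-(p + \<beta>))"
      using m s c by (intro mult_left_mono powr_mono2') auto
    finally have "(A * w powr (-\<beta>))\<^sup>2 \<le> (c * m powr (-(p + \<beta>)))\<^sup>2"
      by (metis abs_le_square_iff abs_of_nonneg order_trans abs_ge_zero)
    also have "\<dots> = c\<^sup>2 * m powr (-(2 * p + 2 * \<beta>))"
      using m by (simp add: power_mult_distrib powr_realpow[symmetric] powr_powr mult.commute)
    finally show ?thesis .
  qed
  finally show ?thesis using t by (simp add: divide_right_mono)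
qed

lemma sums_aliased_coefficients:
  fixes a f0 :: "nat \<Rightarrow> real" and \<psi> :: "nat \<Rightarrow> real \<Rightarrow> real" and J :: "nat \<Rightarrow> nat"
  assumes n: "n \<ge> 1" and k: "k \<in> {1..<n}"
    and orth: "\<And>j. j \<in> {1..<n} \<Longrightarrow> dip n (\<psi> j) (\<psi> k) = (if j = k then 1 else 0)"
    and J: "\<And>l. l \<ge> 1 \<Longrightarrow> J l \<in> {l * n..<(l + 1) * n}"
    and sparse: "\<And>l j. l \<ge> 1 \<Longrightarrow> j \<in> {l * n..<(l + 1) * n} \<Longrightarrow> j \<noteq> J l \<Longrightarrow> dip n (\<psi> j) (\<psi> k) = 0"
    and A_series: "\<And>x. x \<in> {0..1} \<Longrightarrow> summable (\<lambda>j. a (Suc j) * f0 (Suc j) * \<psi> (Suc j) x)"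
  shows "(\<lambda>l. a (J (Suc l)) * f0 (J (Suc l)) * dip n (\<psi> (J (Suc l))) (\<psi> k))
    sums (Udata a \<psi> n f0 (\<lambda>_. 0) k - a k * f0 k)"
proof -
  define g where "g j = a j * f0 j * dip n (\<psi> j) (\<psi> k)" for j
  have "(\<lambda>j. g (Suc j)) sums Udata a \<psi> n f0 (\<lambda>_. 0) k"
    unfolding g_def by (rule sums_Udata_noiseless[OF A_series])
  then have "(\<lambda>l. g (J (Suc l))) sums (Udata a \<psi> n f0 (\<lambda>_. 0) k - (\<Sum>j\<in>{1..<n}. g j))"
    by (rule sums_block_sparse[OF _ n J]) (auto simp: g_def sparse)
  moreover have "(\<Sum>j\<in>{1..<n}. g j) = a k * f0 k"
    using k orth by (simp add: g_def if_distrib[of "\<lambda>x. _ * x"] cong: if_cong)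
  ultimately show ?thesis by (simp add: g_def)
qed

lemma block_index_bounds:
  fixes J :: "nat \<Rightarrow> nat"
  assumes n: "n \<ge> 1" and J: "\<And>l. l \<ge> 1 \<Longrightarrow> J l \<in> {l * n..<(l + 1) * n}"
  shows "strict_mono (\<lambda>l. J (Suc l))" and "J (Suc l) \<ge> 1" and "real (Suc l) * real n \<le> real (J (Suc l))"
proof -
  show "strict_mono (\<lambda>l. J (Suc l))"
  proof (rule strict_monoI)
    fix l l' :: nat assume "l < l'"
    then have "(Suc l + 1) * n \<le> Suc l' * n" by (intro mult_right_mono) auto
    then show "J (Suc l) < J (Suc l')" using J[of "Suc l"] J[of "Suc l'"] by auto
  qed
  have block: "Suc l * n \<le> J (Suc l)" using J[of "Suc l"] by simp
  then show "J (Suc l) \<ge> 1" using n by (metis le_add1 mult_Suc order_trans)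
  show "real (Suc l) * real n \<le> real (J (Suc l))" using block by (metis of_nat_le_iff of_nat_mult)
qed

text \<open>Each aliased coefficient is split by \<open>abs_mult_le_split_weight\<close> with \<open>t = n\<^bsup>-(p+\<beta>)\<^esup>\<close>: the
  \<open>f0\<close>-parts sum to at most \<open>K\<^sup>2\<close>, the \<open>a\<close>-parts to \<open>c\<^sup>2 \<Sum>\<^sub>l ((l+1) n)\<^bsup>-(2p+2\<beta>)\<^esup>\<close>.\<close>
lemma aliasing_error_le:
  fixes a f0 :: "nat \<Rightarrow> real" and \<psi> :: "nat \<Rightarrow> real \<Rightarrow> real" and J :: "nat \<Rightarrow> nat"
  assumes n: "n \<ge> 1" and k: "k \<in> {1..<n}"
    and orth: "\<And>j. j \<in> {1..<n} \<Longrightarrow> dip n (\<psi> j) (\<psi> k) = (if j = k then 1 else 0)"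
    and J: "\<And>l. l \<ge> 1 \<Longrightarrow> J l \<in> {l * n..<(l + 1) * n}"
    and J_dip: "\<And>l. l \<ge> 1 \<Longrightarrow> \<bar>dip n (\<psi> (J l)) (\<psi> k)\<bar> \<le> Mc"
    and sparse: "\<And>l j. l \<ge> 1 \<Longrightarrow> j \<in> {l * n..<(l + 1) * n} \<Longrightarrow> j \<noteq> J l \<Longrightarrow> dip n (\<psi> j) (\<psi> k) = 0"
    and A_series: "\<And>x. x \<in> {0..1} \<Longrightarrow> summable (\<lambda>j. a (Suc j) * f0 (Suc j) * \<psi> (Suc j) x)"
    and a_le: "\<And>j. j \<ge> 1 \<Longrightarrow> \<bar>a j\<bar> \<le> c * real j powr (-p)"
    and f0: "(\<lambda>k. (f0 k)\<^sup>2 * real k powr (2 * \<beta>)) summable_on {1..}"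
    and f0_le: "infsum (\<lambda>k. (f0 k)\<^sup>2 * real k powr (2 * \<beta>)) {1..} \<le> K\<^sup>2"
    and \<beta>p: "\<beta> + p > 1 / 2"
  shows "\<bar>Udata a \<psi> n f0 (\<lambda>_. 0) k - a k * f0 k\<bar>
     \<le> Mc / 2 * (K\<^sup>2 + c\<^sup>2 * (\<Sum>l. real (Suc l) powr (-(2 * p + 2 * \<beta>)))) * real n powr (-(p + \<beta>))"
proof -
  define g where "g l = a (J (Suc l)) * f0 (J (Suc l)) * dip n (\<psi> (J (Suc l))) (\<psi> k)" for l
  define h where "h j = (f0 j)\<^sup>2 * real j powr (2 * \<beta>)" for j
  define t where "t = real n powr (-(p + \<beta>))"
  define Z where "Z = (\<Sum>l. real (Suc l) powr (-(2 * p + 2 * \<beta>)))"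
  have t: "t > 0" unfolding t_def using n by simp
  have Mc: "Mc \<ge> 0" using J_dip[of 1] by linarith
  note J_bounds = block_index_bounds[OF n J]
  have "h summable_on {1..}" "infsum h {1..} \<le> K\<^sup>2"
    using f0 f0_le by (simp_all add: h_def[abs_def])
  then have h_sum: "summable (\<lambda>l. h (J (Suc l)))" "(\<Sum>l. h (J (Suc l))) \<le> K\<^sup>2"
    using summable_comp_le_infsum[OF J_bounds(1,2), of h] by (auto simp: h_def)
  have Z_sum: "summable (\<lambda>l. real (Suc l) powr (-(2 * p + 2 * \<beta>)))"
    using \<beta>p summable_real_powr_iff[of "-(2 * p + 2 * \<beta>)"] by (subst summable_Suc_iff) simp
  define B where "B l = Mc / 2 * (t * h (J (Suc l)) + c\<^sup>2 * real n powr (-(2 * p + 2 * \<beta>))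
      * real (Suc l) powr (-(2 * p + 2 * \<beta>)) / t)" for l
  have term_le: "\<bar>g l\<bar> \<le> B l" for l
  proof -
    have "\<bar>a (J (Suc l)) * f0 (J (Suc l))\<bar> \<le> (t * h (J (Suc l))
        + c\<^sup>2 * (real (Suc l) * real n) powr (-(2 * p + 2 * \<beta>)) / t) / 2"
      unfolding h_def using J_bounds(2,3)[of l] n \<beta>p a_le[OF J_bounds(2)]
      by (intro abs_mult_le_split_weight t) auto
    then have "\<bar>g l\<bar> \<le> (t * h (J (Suc l))
        + c\<^sup>2 * (real (Suc l) * real n) powr (-(2 * p + 2 * \<beta>)) / t) / 2 * Mc"
      unfolding g_def abs_mult[of _ "dip _ _ _"] using J_dip[of "Suc l"] Mc
      by (intro mult_mono) auto
    also have "\<dots> = B l" unfolding B_def powr_mult by (simp add: algebra_simps)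
    finally show ?thesis .
  qed
  have B_sums: "B sums (Mc / 2 * (t * (\<Sum>l. h (J (Suc l))) + c\<^sup>2 * Z * t))"
  proof -
    have "B sums (Mc / 2 * (t * (\<Sum>l. h (J (Suc l))) + c\<^sup>2 * real n powr (-(2 * p + 2 * \<beta>)) * Z / t))"
      unfolding B_def Z_def using h_sum(1) Z_sum
      by (intro sums_mult sums_add sums_divide summable_sums) auto
    moreover have "real n powr (-(2 * p + 2 * \<beta>)) = t * t"
      unfolding t_def using n by (simp add: powr_add[symmetric])
    ultimately show ?thesis using t by (simp add: algebra_simps)
  qed
  have "\<bar>Udata a \<psi> n f0 (\<lambda>_. 0) k - a k * f0 k\<bar> \<le> Mc / 2 * (t * (\<Sum>l. h (J (Suc l))) + c\<^sup>2 * Z * t)"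
    using sums_aliased_coefficients[OF n k orth J sparse A_series, folded g_def] B_sums term_le
    by (rule abs_sums_le)
  also have "\<dots> \<le> Mc / 2 * (t * K\<^sup>2 + c\<^sup>2 * Z * t)"
    using h_sum(2) t Mc by (intro mult_left_mono add_right_mono) auto
  finally show ?thesis unfolding t_def Z_def by (simp add: algebra_simps)
qed

section \<open>The prior and the posterior variance\<close>

definition prior_var :: "real \<Rightarrow> real \<Rightarrow> nat \<Rightarrow> real" where
  "prior_var \<rho> \<alpha> k = \<rho>\<^sup>2 * real k powr (- 1 - 2 * \<alpha>)"

definition contraction_rate :: "real \<Rightarrow> real \<Rightarrow> real \<Rightarrow> real \<Rightarrow> nat \<Rightarrow> real" where
  "contraction_rate \<alpha> \<beta> p \<rho> n = max ((\<rho>\<^sup>2 * real n) powr (- min (\<beta> / (2 * \<alpha> + 2 * p + 1)) 1))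
     (\<rho> * (\<rho>\<^sup>2 * real n) powr (- (\<alpha> / (2 * \<alpha> + 2 * p + 1))))"

lemma one_plus_mult_le_one_minus_powr:
  fixes y s :: real
  assumes y: "0 < y" "y < 1" and s: "s > 0"
  shows "1 + s * y \<le> (1 - y) powr (-s)"
proof -
  have "s * y \<le> s * (- ln (1 - y))"
    using ln_le_minus_one[of "1 - y"] y s by (intro mult_left_mono) auto
  also have "1 + s * (- ln (1 - y)) \<le> exp (-s * ln (1 - y))"
    using exp_ge_add_one_self[of "-s * ln (1 - y)"] by simp
  also have "exp (-s * ln (1 - y)) = (1 - y) powr (-s)"
    using y by (simp add: powr_def)
  finally show ?thesis by simp
qed

lemma powr_diff_ge_succ_powr:
  fixes k s :: real
  assumes s: "s > 0" and k: "k \<ge> 1"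
  shows "s * (k + 1) powr (-1 - s) \<le> k powr (-s) - (k + 1) powr (-s)"
proof -
  define y where "y = 1 / (k + 1)"
  have y: "0 < y" "y < 1" unfolding y_def using k by auto
  have "(k + 1) powr (-s) * (1 + s * y) \<le> (k + 1) powr (-s) * (1 - y) powr (-s)"
    using one_plus_mult_le_one_minus_powr[OF y s] by (intro mult_left_mono) auto
  also have "\<dots> = k powr (-s)"
  proof -
    have "(k + 1) * (1 - y) = k" using k by (simp add: y_def field_simps)
    then show ?thesis by (simp add: powr_mult[symmetric])
  qed
  finally have "s * ((k + 1) powr (-s) * y) \<le> k powr (-s) - (k + 1) powr (-s)"
    by (simp add: algebra_simps)
  moreover have "(k + 1) powr (-s) * y = (k + 1) powr (-1 - s)"
  proof -
    have "-1 - s = -s + -1" by simp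
    then have "(k + 1) powr (-1 - s) = (k + 1) powr (-s) * (k + 1) powr (-1)"
      by (simp only: powr_add)
    moreover have "(k + 1) powr (-1) = y" unfolding y_def using k by (simp add: powr_minus_divide)
    ultimately show ?thesis by (simp only:)
  qed
  ultimately show ?thesis by simp
qed

lemma sum_powr_tail_le:
  fixes s :: real and N M :: nat
  assumes s: "s > 0" and N: "N \<ge> 1"
  shows "(\<Sum>k\<in>{N<..M}. real k powr (-1 - s)) \<le> real N powr (-s) / s"
proof (cases "N \<le> M")
  case True
  have "(\<Sum>k\<in>{N<..M}. real k powr (-1 - s)) \<le> (real N powr (-s) - real M powr (-s)) / s"
    using True
  proof (induction M rule: dec_induct)
    case (step M)
    have "{N<..Suc M} = insert (Suc M) {N<..M}" using step.hyps(1) by auto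
    then have "(\<Sum>k\<in>{N<..Suc M}. real k powr (-1 - s))
        = real (Suc M) powr (-1 - s) + (\<Sum>k\<in>{N<..M}. real k powr (-1 - s))" by simp
    also have "\<dots> \<le> (real M powr (-s) - real (Suc M) powr (-s)) / s + (real N powr (-s) - real M powr (-s)) / s"
    proof (intro add_mono step.IH)
      show "real (Suc M) powr (-1 - s) \<le> (real M powr (-s) - real (Suc M) powr (-s)) / s"
        using powr_diff_ge_succ_powr[OF s, of "real M"] step.hyps(1) N s
        by (simp add: pos_le_divide_eq mult.commute add.commute)
    qed
    finally show ?case by (simp add: diff_divide_distrib)
  qed simp
  also have "\<dots> \<le> real N powr (-s) / s"
    using s by (simp add: divide_right_mono)
  finally show ?thesis .
qed (use s in simp)

lemma variance_rate_sq_eq: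
  fixes \<rho> \<alpha> p :: real and n :: nat
  assumes "\<rho> > 0" "n \<ge> 1" "2 * \<alpha> + 2 * p + 1 > 0"
  shows "(\<rho> * (\<rho>\<^sup>2 * real n) powr (- (\<alpha> / (2 * \<alpha> + 2 * p + 1))))\<^sup>2
    = (\<rho>\<^sup>2 * real n) powr ((2 * p + 1) / (2 * \<alpha> + 2 * p + 1)) / real n"
proof -
  define D where "D = 2 * \<alpha> + 2 * p + 1"
  define x where "x = \<rho>\<^sup>2 * real n"
  have x: "x > 0" using assms unfolding x_def by simp
  have "(\<rho> * x powr (- (\<alpha> / D)))\<^sup>2 = \<rho>\<^sup>2 * x powr (- (2 * \<alpha> / D))"
    using x by (simp add: power_mult_distrib powr_realpow[symmetric] powr_powr mult.commute)
  also have "\<rho>\<^sup>2 = x powr 1 / real n" using assms x unfolding x_def by simp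
  also have "x powr 1 / real n * x powr (- (2 * \<alpha> / D)) = x powr (1 + - (2 * \<alpha> / D)) / real n"
    by (subst powr_add) simp
  also have "1 + - (2 * \<alpha> / D) = (2 * p + 1) / D" using assms unfolding D_def by (simp add: field_simps)
  finally show ?thesis unfolding D_def x_def .
qed

lemma nat_floor_bounds:
  fixes t :: real assumes "t \<ge> 1"
  shows "nat \<lfloor>t\<rfloor> \<ge> 1" "real (nat \<lfloor>t\<rfloor>) \<le> t" "t \<le> 2 * real (nat \<lfloor>t\<rfloor>)"
proof -
  have "\<lfloor>t\<rfloor> \<ge> 1" using assms by linarith
  moreover from this have "real (nat \<lfloor>t\<rfloor>) = of_int \<lfloor>t\<rfloor>" by simp
  moreover have "t - 1 < of_int \<lfloor>t\<rfloor>" "of_int \<lfloor>t\<rfloor> \<le> t" by linarith+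
  ultimately show "nat \<lfloor>t\<rfloor> \<ge> 1" "real (nat \<lfloor>t\<rfloor>) \<le> t" "t \<le> 2 * real (nat \<lfloor>t\<rfloor>)"
    by linarith+
qed

lemma post_var_le_prior:
  assumes "lam k \<ge> 0"
  shows "post_var a lam n k \<le> lam k"
  using assms by (simp add: post_var_def divide_le_eq_1 mult_le_cancel_left1 divide_le_eq
      add_nonneg_pos mult.commute[of _ "lam k"] mult_nonneg_nonneg)

lemma post_var_le_inverse:
  assumes "lam k \<ge> 0" and "n \<ge> 1" and "a k \<noteq> 0"
  shows "post_var a lam n k \<le> 1 / (real n * (a k)\<^sup>2)"
proof (cases "lam k = 0 \<or> k \<ge> n")
  case False
  then have "0 < real n * (a k)\<^sup>2 * lam k" using assms by simp
  then have "lam k / (real n * (a k)\<^sup>2 * lam k + 1) \<le> lam k / (real n * (a k)\<^sup>2 * lam k)"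
    using assms by (intro divide_left_mono) auto
  then show ?thesis using False by (simp add: post_var_def)
qed (auto simp: post_var_def)

lemma sum_powr_head_le:
  fixes \<rho> \<alpha> p c :: real and n N :: nat
  assumes \<rho>: "\<rho> > 0" and \<alpha>: "\<alpha> > 0" and p: "p > 0" and n: "n \<ge> 1" and c: "c > 0"
    and N: "real N \<le> (\<rho>\<^sup>2 * real n) powr (1 / (2 * \<alpha> + 2 * p + 1))"
  shows "(\<Sum>k\<in>{1..N}. real k powr (2 * p) / (c * real n))
    \<le> (\<rho> * (\<rho>\<^sup>2 * real n) powr (- (\<alpha> / (2 * \<alpha> + 2 * p + 1))))\<^sup>2 / c"
proof -
  define D where "D = 2 * \<alpha> + 2 * p + 1"
  define x where "x = \<rho>\<^sup>2 * real n"
  have D: "D > 0" and x: "x > 0" using \<alpha> p \<rho> n unfolding D_def x_def by auto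
  have "real N * real N powr (2 * p) = real N powr (2 * p + 1)"
    by (cases "N = 0") (simp_all add: powr_add)
  also have "\<dots> \<le> (x powr (1 / D)) powr (2 * p + 1)"
    using N p unfolding x_def D_def by (intro powr_mono2) auto
  also have "\<dots> = x powr ((2 * p + 1) / D)" using x by (simp add: powr_powr)
  finally have N_pow: "real N * real N powr (2 * p) \<le> x powr ((2 * p + 1) / D)" .
  have "(\<Sum>k\<in>{1..N}. real k powr (2 * p) / (c * real n)) \<le> real N * (real N powr (2 * p) / (c * real n))"
  proof (rule order_trans[OF sum_bounded_above[where K="real N powr (2 * p) / (c * real n)"]])
    fix k assume "k \<in> {1..N}"
    then show "real k powr (2 * p) / (c * real n) \<le> real N powr (2 * p) / (c * real n)"
      using p c n by (intro divide_right_mono powr_mono2) auto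
  qed simp
  also have "\<dots> \<le> x powr ((2 * p + 1) / D) / (c * real n)"
    using N_pow c n by (simp add: divide_right_mono)
  also have "\<dots> = (\<rho> * x powr (- (\<alpha> / D)))\<^sup>2 / c"
    using variance_rate_sq_eq[OF \<rho> n] D unfolding x_def D_def by (simp add: field_simps)
  finally show ?thesis unfolding x_def D_def .
qed

lemma sum_prior_var_tail_le:
  fixes \<rho> \<alpha> p :: real and n N M :: nat
  assumes \<rho>: "\<rho> > 0" and \<alpha>: "\<alpha> > 0" and p: "p > 0" and n: "n \<ge> 1" and N: "N \<ge> 1"
    and N_ge: "(\<rho>\<^sup>2 * real n) powr (1 / (2 * \<alpha> + 2 * p + 1)) \<le> 2 * real N"
  shows "(\<Sum>k\<in>{N<..M}. prior_var \<rho> \<alpha> k)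
    \<le> 2 powr (2 * \<alpha>) / (2 * \<alpha>) * (\<rho> * (\<rho>\<^sup>2 * real n) powr (- (\<alpha> / (2 * \<alpha> + 2 * p + 1))))\<^sup>2"
proof -
  define D where "D = 2 * \<alpha> + 2 * p + 1"
  define x where "x = \<rho>\<^sup>2 * real n"
  have D: "D > 0" and x: "x > 0" using \<alpha> p \<rho> n unfolding D_def x_def by auto
  have "(\<Sum>k\<in>{N<..M}. prior_var \<rho> \<alpha> k) = \<rho>\<^sup>2 * (\<Sum>k\<in>{N<..M}. real k powr (-1 - 2 * \<alpha>))"
    by (simp add: prior_var_def sum_distrib_left)
  also have "\<dots> \<le> \<rho>\<^sup>2 * (real N powr (- (2 * \<alpha>)) / (2 * \<alpha>))"
    using sum_powr_tail_le[of "2 * \<alpha>" N M] \<alpha> N by (intro mult_left_mono) auto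
  also have "real N powr (- (2 * \<alpha>)) \<le> (x powr (1 / D) / 2) powr (- (2 * \<alpha>))"
    using N_ge x \<alpha> n unfolding x_def D_def by (intro powr_mono2') auto
  also have "\<dots> = 2 powr (2 * \<alpha>) * x powr (- (2 * \<alpha> / D))"
    using x by (simp add: powr_divide powr_powr powr_minus_divide)
  also have "\<rho>\<^sup>2 * (2 powr (2 * \<alpha>) * x powr (- (2 * \<alpha> / D)) / (2 * \<alpha>))
      = 2 powr (2 * \<alpha>) / (2 * \<alpha>) * (\<rho> * x powr (- (\<alpha> / D)))\<^sup>2"
    using x by (simp add: power_mult_distrib powr_realpow[symmetric] powr_powr mult.commute)
  finally show ?thesis using \<alpha> \<rho> n unfolding x_def D_def by (simp add: divide_right_mono mult_left_mono)
qed

lemma sum_post_var_le: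
  fixes a :: "nat \<Rightarrow> real" and \<rho> \<alpha> p c1 :: real and n :: nat
  assumes c1: "c1 > 0" and a_ge: "\<And>k. k \<ge> 1 \<Longrightarrow> c1 * real k powr (-p) \<le> a k"
    and \<rho>: "\<rho> > 0" and \<alpha>: "\<alpha> > 0" and p: "p > 0" and n: "n \<ge> 1" and x: "\<rho>\<^sup>2 * real n \<ge> 1"
  shows "(\<Sum>k\<in>{1..<n}. post_var a (prior_var \<rho> \<alpha>) n k)
    \<le> (1 / c1\<^sup>2 + 2 powr (2 * \<alpha>) / (2 * \<alpha>)) * (\<rho> * (\<rho>\<^sup>2 * real n) powr (- (\<alpha> / (2 * \<alpha> + 2 * p + 1))))\<^sup>2"
proof -
  define t where "t = (\<rho>\<^sup>2 * real n) powr (1 / (2 * \<alpha> + 2 * p + 1))"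
  have "t \<ge> 1" unfolding t_def using x \<alpha> p by (simp add: ge_one_powr_ge_zero)
  define N where "N = nat \<lfloor>t\<rfloor>"
  have N: "N \<ge> 1" "real N \<le> t" "t \<le> 2 * real N"
    unfolding N_def using nat_floor_bounds[OF \<open>t \<ge> 1\<close>] by auto
  have split: "post_var a (prior_var \<rho> \<alpha>) n k
      \<le> (if k \<le> N then real k powr (2 * p) / (c1\<^sup>2 * real n) else prior_var \<rho> \<alpha> k)" if "k \<ge> 1" for k
  proof -
    have prior: "prior_var \<rho> \<alpha> k \<ge> 0" by (simp add: prior_var_def)
    have a: "0 < c1 * real k powr (-p)" "c1 * real k powr (-p) \<le> a k" using a_ge[OF that] c1 that by auto
    have "post_var a (prior_var \<rho> \<alpha>) n k \<le> 1 / (real n * (a k)\<^sup>2)"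
      using post_var_le_inverse[where lam="prior_var \<rho> \<alpha>", OF prior n] a by simp
    also have "\<dots> \<le> 1 / (real n * (c1 * real k powr (-p))\<^sup>2)"
      using a n that by (intro divide_left_mono mult_left_mono power_mono mult_pos_pos) auto
    also have "\<dots> = real k powr (2 * p) / (c1\<^sup>2 * real n)"
      using that by (simp add: power_mult_distrib powr_realpow[symmetric] powr_powr powr_minus field_simps)
    finally show ?thesis using post_var_le_prior[where lam="prior_var \<rho> \<alpha>", OF prior] by simp
  qed
  have "(\<Sum>k\<in>{1..<n}. post_var a (prior_var \<rho> \<alpha>) n k)
      \<le> (\<Sum>k\<in>{1..<n}. if k \<le> N then real k powr (2 * p) / (c1\<^sup>2 * real n) else prior_var \<rho> \<alpha> k)"
    using split by (intro sum_mono) auto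
  also have "\<dots> \<le> (\<Sum>k\<in>{1..N}. real k powr (2 * p) / (c1\<^sup>2 * real n)) + (\<Sum>k\<in>{N<..n}. prior_var \<rho> \<alpha> k)"
    unfolding sum.If_cases[OF finite_atLeastLessThan]
    by (intro add_mono sum_mono2) (auto simp: prior_var_def)
  also have "\<dots> \<le> (1 / c1\<^sup>2 + 2 powr (2 * \<alpha>) / (2 * \<alpha>)) * (\<rho> * (\<rho>\<^sup>2 * real n) powr (- (\<alpha> / (2 * \<alpha> + 2 * p + 1))))\<^sup>2"
    using sum_powr_head_le[OF \<rho> \<alpha> p n _ N(2)[unfolded t_def], of "c1\<^sup>2"]
      sum_prior_var_tail_le[OF \<rho> \<alpha> p n N(1) N(3)[unfolded t_def], of n] c1
    by (simp add: algebra_simps)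
  finally show ?thesis .
qed

section \<open>Bias of the posterior mean\<close>

lemma powr_div_one_plus_le:
  fixes c x k D \<beta> y :: real
  assumes c: "c > 0" and x: "x \<ge> 1" and k: "k \<ge> 1" and D: "D > 0" and \<beta>: "\<beta> > 0"
    and y: "y \<ge> c * x * k powr (-D)"
  shows "k powr (-\<beta>) / (1 + y) \<le> max 1 (1 / c) * x powr (- min (\<beta> / D) 1)"
proof -
  define m where "m = min (\<beta> / D) 1"
  have m: "0 < m" "m \<le> \<beta> / D" "m \<le> 1" unfolding m_def using \<beta> D by auto
  have y0: "0 < c * x * k powr (-D)" using c x k by simp
  have k_pow: "k powr (-\<beta>) = (k powr D) powr (-(\<beta> / D))" using D k by (simp add: powr_powr)
  show ?thesis
  proof (cases "x \<le> k powr D")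
    case True
    have "k powr (-\<beta>) / (1 + y) \<le> k powr (-\<beta>) / 1"
      using y y0 by (intro divide_left_mono) auto
    also have "\<dots> \<le> x powr (-(\<beta> / D))" unfolding k_pow using True x D \<beta> by (simp add: powr_mono2')
    also have "\<dots> \<le> x powr (-m)" using x m by (intro powr_mono) auto
    also have "\<dots> \<le> max 1 (1 / c) * x powr (-m)" by (simp add: mult_le_cancel_right1)
    finally show ?thesis unfolding m_def .
  next
    case False
    have "k powr (D - \<beta>) \<le> x powr (1 - m)"
    proof (cases "\<beta> \<le> D")
      case True
      then have "1 - m = (D - \<beta>) / D" using D unfolding m_def by (simp add: field_simps)
      moreover have "k powr (D - \<beta>) = (k powr D) powr ((D - \<beta>) / D)" using D k by (simp add: powr_powr)
      ultimately show ?thesis using False True D by (simp add: powr_mono2)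
    next
      case False
      then have "k powr (D - \<beta>) \<le> k powr 0" using k by (intro powr_mono) auto
      then show ?thesis using False D k x unfolding m_def by simp
    qed
    have "k powr (-\<beta>) / (1 + y) \<le> k powr (-\<beta>) / (c * x * k powr (-D))"
    proof (rule divide_left_mono)
      have "0 < 1 + y" using y y0 by linarith
      then show "0 < (1 + y) * (c * x * k powr (-D))" using y0 by simp
    qed (use y in auto)
    also have "\<dots> = k powr (D - \<beta>) / (c * x)"
      using k by (simp add: powr_diff powr_minus field_simps)
    also have "\<dots> \<le> x powr (1 - m) / (c * x)"
      using \<open>k powr (D - \<beta>) \<le> x powr (1 - m)\<close> c x by (intro divide_right_mono) auto
    also have "\<dots> = 1 / c * x powr (-m)"
      using x by (simp add: powr_diff powr_minus divide_inverse)
    also have "\<dots> \<le> max 1 (1 / c) * x powr (-m)" by (intro mult_right_mono) auto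
    finally show ?thesis unfolding m_def .
  qed
qed

lemma powr_neg_le_contraction_rate:
  fixes \<rho> \<alpha> \<beta> p :: real and n :: nat
  assumes n: "n \<ge> 1" and \<rho>: "\<rho> > 0" and \<alpha>: "\<alpha> > 0" and \<beta>: "\<beta> > 0" and p: "p > 0"
  shows "real n powr (-\<beta>) \<le> contraction_rate \<alpha> \<beta> p \<rho> n"
proof -
  define D where "D = 2 * \<alpha> + 2 * p + 1"
  define x where "x = \<rho>\<^sup>2 * real n"
  have D: "D > 1" and x: "x > 0" and nr: "real n \<ge> 1"
    using \<alpha> p \<rho> n unfolding D_def x_def by auto
  show ?thesis
  proof (cases "x \<le> real n powr D")
    case True
    have "real n powr (-\<beta>) \<le> real n powr (- (D * min (\<beta> / D) 1))"
      using nr D \<beta> by (intro powr_mono) (auto simp: min_def field_simps)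
    also have "\<dots> = (real n powr D) powr (- min (\<beta> / D) 1)" by (simp add: powr_powr)
    also have "\<dots> \<le> x powr (- min (\<beta> / D) 1)" using True x D \<beta> by (intro powr_mono2') auto
    finally show ?thesis unfolding contraction_rate_def x_def D_def by simp
  next
    case False
    have "real n powr 1 \<le> real n powr (2 * p + 1)" using nr p by (intro powr_mono) auto
    also have "\<dots> = (real n powr D) powr ((2 * p + 1) / D)" using D by (simp add: powr_powr)
    also have "\<dots> \<le> x powr ((2 * p + 1) / D)" using False nr D p by (intro powr_mono2) auto
    finally have "1 \<le> x powr ((2 * p + 1) / D) / real n" using nr by simp
    also have "\<dots> = (\<rho> * x powr (- (\<alpha> / D)))\<^sup>2"
      unfolding x_def D_def by (rule variance_rate_sq_eq[symmetric, OF \<rho> n]) (use \<alpha> p in simp)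
    finally have "1\<^sup>2 \<le> (\<rho> * x powr (- (\<alpha> / D)))\<^sup>2" by simp
    then have "1 \<le> \<rho> * x powr (- (\<alpha> / D))"
      by (rule power2_le_imp_le) (use \<rho> in simp)
    moreover have "real n powr (-\<beta>) \<le> real n powr 0" using nr \<beta> by (intro powr_mono) auto
    ultimately show ?thesis using nr unfolding contraction_rate_def x_def D_def by simp
  qed
qed

lemma square_le_of_powr_neg_mult_le:
  fixes g B \<beta> :: real and k :: nat
  assumes k: "k \<ge> 1" and g: "g \<ge> 0" and le: "real k powr (-\<beta>) * g \<le> B"
  shows "g\<^sup>2 \<le> B\<^sup>2 * real k powr (2 * \<beta>)"
proof -
  have "g = real k powr (-\<beta>) * g * real k powr \<beta>"
    using k by (simp add: powr_minus field_simps)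
  also have "\<dots> \<le> B * real k powr \<beta>" using le by (intro mult_right_mono) auto
  finally have "g\<^sup>2 \<le> (B * real k powr \<beta>)\<^sup>2" using g by (intro power_mono)
  also have "\<dots> = B\<^sup>2 * real k powr (2 * \<beta>)"
    using k by (simp add: power_mult_distrib powr_realpow[symmetric] powr_powr mult.commute)
  finally show ?thesis .
qed

lemma Snorm_le_imp_infsum_le:
  assumes "Snorm \<beta> f \<le> K"
  shows "infsum (\<lambda>k. (f k)\<^sup>2 * real k powr (2 * \<beta>)) {1..} \<le> K\<^sup>2"
proof -
  have nonneg: "infsum (\<lambda>k. (f k)\<^sup>2 * real k powr (2 * \<beta>)) {1..} \<ge> 0" by (intro infsum_nonneg) auto
  have "(sqrt (infsum (\<lambda>k. (f k)\<^sup>2 * real k powr (2 * \<beta>)) {1..}))\<^sup>2 \<le> K\<^sup>2"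
    using assms nonneg unfolding Snorm_def by (intro power_mono) auto
  then show ?thesis using nonneg by simp
qed

lemma weighted_split_sum_le:
  fixes f u :: "nat \<Rightarrow> real"
  assumes n: "n \<ge> 1" and f: "inS \<beta> f" and C: "C \<ge> 0"
    and head: "\<And>k. k \<in> {1..<n} \<Longrightarrow> u k \<le> C * real k powr (2 * \<beta>)"
    and tail: "\<And>k. k \<ge> n \<Longrightarrow> 1 \<le> C * real k powr (2 * \<beta>)"
  shows "(\<Sum>k\<in>{1..<n}. (f k)\<^sup>2 * u k) + infsum (\<lambda>k. (f k)\<^sup>2) {n..}
    \<le> C * infsum (\<lambda>k. (f k)\<^sup>2 * real k powr (2 * \<beta>)) {1..}"
proof -
  define h where "h k = (f k)\<^sup>2 * real k powr (2 * \<beta>)" for k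
  have sub: "{n..} \<subseteq> {1..}" using n by auto
  have h: "h summable_on {n..}" and sq: "(\<lambda>k. (f k)\<^sup>2) summable_on {n..}"
    using f summable_on_subset[OF _ sub] unfolding inS_def h_def by auto
  have "(\<Sum>k\<in>{1..<n}. (f k)\<^sup>2 * u k) \<le> (\<Sum>k\<in>{1..<n}. C * h k)"
  proof (rule sum_mono)
    fix k assume "k \<in> {1..<n}"
    then have "(f k)\<^sup>2 * u k \<le> (f k)\<^sup>2 * (C * real k powr (2 * \<beta>))"
      using head by (intro mult_left_mono) auto
    then show "(f k)\<^sup>2 * u k \<le> C * h k" by (simp add: h_def algebra_simps)
  qed
  moreover have "infsum (\<lambda>k. (f k)\<^sup>2) {n..} \<le> infsum (\<lambda>k. C * h k) {n..}"
  proof (rule infsum_mono[OF sq summable_on_cmult_right[OF h]])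
    fix k assume "k \<in> {n..}"
    then have "(f k)\<^sup>2 * 1 \<le> (f k)\<^sup>2 * (C * real k powr (2 * \<beta>))"
      using tail by (intro mult_left_mono) auto
    then show "(f k)\<^sup>2 \<le> C * h k" by (simp add: h_def algebra_simps)
  qed
  moreover have "{1..} = {1..<n} \<union> {n..}" using n by auto
  then have "infsum h {1..} = (\<Sum>k\<in>{1..<n}. h k) + infsum h {n..}"
    using h by (simp only:) (subst infsum_Un_disjoint; auto simp: summable_on_finite infsum_finite)
  ultimately have "(\<Sum>k\<in>{1..<n}. (f k)\<^sup>2 * u k) + infsum (\<lambda>k. (f k)\<^sup>2) {n..} \<le> C * infsum h {1..}"
    using h by (simp add: infsum_cmult_right sum_distrib_left[symmetric] distrib_left add_mono)
  then show ?thesis unfolding h_def[abs_def] .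
qed

lemma shrinkage_bias_le:
  fixes a f0 :: "nat \<Rightarrow> real" and \<rho> \<alpha> \<beta> p c1 K :: real and n :: nat
  assumes c1: "c1 > 0" and a_ge: "\<And>k. k \<ge> 1 \<Longrightarrow> c1 * real k powr (-p) \<le> a k"
    and \<rho>: "\<rho> > 0" and \<alpha>: "\<alpha> > 0" and \<beta>: "\<beta> > 0" and p: "p > 0" and n: "n \<ge> 1"
    and x: "\<rho>\<^sup>2 * real n \<ge> 1" and f0: "inS \<beta> f0" and K: "Snorm \<beta> f0 \<le> K"
  shows "(\<Sum>k\<in>{1..<n}. (f0 k)\<^sup>2 * (1 / (real n * (a k)\<^sup>2 * prior_var \<rho> \<alpha> k + 1))\<^sup>2)
      + infsum (\<lambda>k. (f0 k)\<^sup>2) {n..}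
    \<le> (max 1 (1 / c1\<^sup>2) * contraction_rate \<alpha> \<beta> p \<rho> n)\<^sup>2 * K\<^sup>2"
proof -
  define D where "D = 2 * \<alpha> + 2 * p + 1"
  define E where "E = contraction_rate \<alpha> \<beta> p \<rho> n"
  define m where "m = max 1 (1 / c1\<^sup>2)"
  have D: "D > 0" unfolding D_def using \<alpha> p by simp
  have E: "real n powr (-\<beta>) \<le> E" unfolding E_def by (rule powr_neg_le_contraction_rate[OF n \<rho> \<alpha> \<beta> p])
  have mE: "E \<le> m * E" using E order_trans[OF powr_ge_zero E] unfolding m_def by (simp add: mult_le_cancel_right1)
  have head: "(1 / (real n * (a k)\<^sup>2 * prior_var \<rho> \<alpha> k + 1))\<^sup>2 \<le> (m * E)\<^sup>2 * real k powr (2 * \<beta>)"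
    if k: "k \<in> {1..<n}" for k
  proof -
    have k1: "k \<ge> 1" using k by simp
    have "0 < c1 * real k powr (-p)" using c1 k1 by simp
    then have "real n * (c1 * real k powr (-p))\<^sup>2 * prior_var \<rho> \<alpha> k \<le> real n * (a k)\<^sup>2 * prior_var \<rho> \<alpha> k"
      using a_ge[OF k1] by (intro mult_right_mono mult_left_mono power_mono) (auto simp: prior_var_def)
    moreover have "real n * (c1 * real k powr (-p))\<^sup>2 * prior_var \<rho> \<alpha> k = c1\<^sup>2 * (\<rho>\<^sup>2 * real n) * real k powr (-D)"
      using k1 unfolding prior_var_def D_def
      by (simp add: power_mult_distrib powr_realpow[symmetric] powr_powr powr_add[symmetric] algebra_simps)
    ultimately have "real k powr (-\<beta>) / (1 + real n * (a k)\<^sup>2 * prior_var \<rho> \<alpha> k)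
        \<le> m * (\<rho>\<^sup>2 * real n) powr (- min (\<beta> / D) 1)"
      unfolding m_def using powr_div_one_plus_le[of "c1\<^sup>2" "\<rho>\<^sup>2 * real n" "real k" D \<beta>] c1 x k1 D \<beta> by simp
    also have "\<dots> \<le> m * E"
      unfolding E_def contraction_rate_def D_def m_def by (intro mult_left_mono) auto
    finally show ?thesis
      using k1 by (intro square_le_of_powr_neg_mult_le) (auto simp: add.commute prior_var_def)
  qed
  have tail: "1 \<le> (m * E)\<^sup>2 * real k powr (2 * \<beta>)" if "k \<ge> n" for k
  proof -
    have "real k powr (-\<beta>) \<le> real n powr (-\<beta>)" using that n \<beta> by (intro powr_mono2') auto
    then have "real k powr (-\<beta>) * 1 \<le> m * E" using E mE by simp
    then show ?thesis using square_le_of_powr_neg_mult_le[of k 1 \<beta> "m * E"] that n by simp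
  qed
  have "(\<Sum>k\<in>{1..<n}. (f0 k)\<^sup>2 * (1 / (real n * (a k)\<^sup>2 * prior_var \<rho> \<alpha> k + 1))\<^sup>2)
      + infsum (\<lambda>k. (f0 k)\<^sup>2) {n..} \<le> (m * E)\<^sup>2 * infsum (\<lambda>k. (f0 k)\<^sup>2 * real k powr (2 * \<beta>)) {1..}"
    by (rule weighted_split_sum_le[OF n f0 _ head tail]) auto
  also have "\<dots> \<le> (m * E)\<^sup>2 * K\<^sup>2" by (intro mult_left_mono Snorm_le_imp_infsum_le K) auto
  finally show ?thesis unfolding m_def E_def .
qed

section \<open>Posterior risk\<close>

lemma shrinkage_term_le:
  fixes A l N D f \<delta> :: real
  assumes l: "l \<ge> 0" and N: "N > 0" and \<delta>: "\<bar>D - A * f\<bar> \<le> \<delta>"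
  defines "den \<equiv> N * A\<^sup>2 * l + 1"
  shows "(N * A * l / den * D - f)\<^sup>2 + (N * A * l / den)\<^sup>2 / N + l / den
    \<le> 2 * (f / den)\<^sup>2 + (2 * N * \<delta>\<^sup>2 + 2) * (l / den)"
proof -
  define g where "g = N * A * l / den"
  have den: "den \<ge> 1" unfolding den_def using l N by simp
  have var: "0 \<le> l / den" "0 \<le> N * l / den" using l N den by simp_all
  have gA: "g * A - 1 = - (1 / den)" unfolding g_def using den by (simp add: den_def field_simps power2_eq_square)
  have "g * D - f = g * (D - A * f) + (g * A - 1) * f" by (simp add: algebra_simps)
  then have bias: "g * D - f = g * (D - A * f) - f / den" unfolding gA by simp
  have "g\<^sup>2 = N * (l / den) * (N * A\<^sup>2 * l / den)" unfolding g_def by (simp add: power2_eq_square)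
  also have "\<dots> \<le> N * (l / den) * 1"
  proof (intro mult_left_mono)
    show "N * A\<^sup>2 * l / den \<le> 1" using den by (simp add: den_def divide_le_eq_1)
  qed (use var in simp)
  finally have g2: "g\<^sup>2 \<le> N * (l / den)" by simp
  have "(g * D - f)\<^sup>2 \<le> 2 * (g * (D - A * f))\<^sup>2 + 2 * (f / den)\<^sup>2"
  proof -
    have "(u - v)\<^sup>2 \<le> 2 * u\<^sup>2 + 2 * v\<^sup>2" for u v :: real
      using zero_le_power2[of "u + v"] by (simp add: power2_eq_square algebra_simps)
    then show ?thesis unfolding bias .
  qed
  also have "(g * (D - A * f))\<^sup>2 \<le> N * (l / den) * \<delta>\<^sup>2"
    unfolding power_mult_distrib using g2 \<delta> var N
    by (intro mult_mono) (auto simp: abs_le_square_iff[symmetric] intro: order_trans[OF abs_ge_zero \<delta>])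
  finally have "(g * D - f)\<^sup>2 \<le> 2 * (N * (l / den) * \<delta>\<^sup>2) + 2 * (f / den)\<^sup>2" by simp
  moreover have "g\<^sup>2 / N \<le> l / den" using g2 N by (simp add: divide_le_eq mult.commute)
  moreover have "(2 * N * \<delta>\<^sup>2 + 2) * (l / den) = 2 * (N * (l / den) * \<delta>\<^sup>2) + 2 * (l / den)"
    by (simp add: algebra_simps)
  ultimately show ?thesis unfolding g_def[symmetric] by linarith
qed

lemma post_risk_le_bias_variance:
  fixes a f0 lam :: "nat \<Rightarrow> real" and \<psi> :: "nat \<Rightarrow> real \<Rightarrow> real" and n :: nat and \<delta> :: real
  assumes lam: "\<And>k. lam k \<ge> 0" and n: "n \<ge> 1"
    and aliasing: "\<And>k. k \<in> {1..<n} \<Longrightarrow> \<bar>Udata a \<psi> n f0 (\<lambda>_. 0) k - a k * f0 k\<bar> \<le> \<delta>"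
  shows "post_risk a \<psi> lam n f0
    \<le> 2 * ((\<Sum>k\<in>{1..<n}. (f0 k / (real n * (a k)\<^sup>2 * lam k + 1))\<^sup>2) + infsum (\<lambda>k. (f0 k)\<^sup>2) {n..})
      + (2 * real n * \<delta>\<^sup>2 + 2) * (\<Sum>k\<in>{1..<n}. post_var a lam n k)"
proof -
  have "(\<Sum>k\<in>{1..<n}. (post_gain a lam n k * Udata a \<psi> n f0 (\<lambda>_. 0) k - f0 k)\<^sup>2
        + (post_gain a lam n k)\<^sup>2 / n + post_var a lam n k)
      \<le> (\<Sum>k\<in>{1..<n}. 2 * (f0 k / (real n * (a k)\<^sup>2 * lam k + 1))\<^sup>2
        + (2 * real n * \<delta>\<^sup>2 + 2) * post_var a lam n k)"
  proof (rule sum_mono)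
    fix k assume k: "k \<in> {1..<n}"
    then have var: "post_var a lam n k = lam k / (real n * (a k)\<^sup>2 * lam k + 1)" by (simp add: post_var_def)
    show "(post_gain a lam n k * Udata a \<psi> n f0 (\<lambda>_. 0) k - f0 k)\<^sup>2
        + (post_gain a lam n k)\<^sup>2 / n + post_var a lam n k
      \<le> 2 * (f0 k / (real n * (a k)\<^sup>2 * lam k + 1))\<^sup>2 + (2 * real n * \<delta>\<^sup>2 + 2) * post_var a lam n k"
      unfolding post_gain_def var by (rule shrinkage_term_le) (use lam n aliasing[OF k] in simp_all)
  qed
  also have "\<dots> = 2 * (\<Sum>k\<in>{1..<n}. (f0 k / (real n * (a k)\<^sup>2 * lam k + 1))\<^sup>2)
      + (2 * real n * \<delta>\<^sup>2 + 2) * (\<Sum>k\<in>{1..<n}. post_var a lam n k)"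
    by (simp add: sum.distrib sum_distrib_left)
  finally show ?thesis
    using infsum_nonneg[of "{n..}" "\<lambda>k. (f0 k)\<^sup>2"] unfolding post_risk_def by simp
qed

lemma mult_powr_neg_square_le:
  fixes C q :: real and n :: nat
  assumes "n \<ge> 1" and "q \<ge> 1 / 2"
  shows "real n * (C * real n powr (-q))\<^sup>2 \<le> C\<^sup>2"
proof -
  have "real n * (real n powr (-q))\<^sup>2 = real n powr (1 + (-q + -q))"
    using assms by (simp only: power2_eq_square powr_add) simp
  also have "\<dots> \<le> real n powr 0" using assms by (intro powr_mono) auto
  finally have "C\<^sup>2 * (real n * (real n powr (-q))\<^sup>2) \<le> C\<^sup>2"
    using assms mult_left_mono[of _ 1 "C\<^sup>2"] by simp
  then show ?thesis by (simp add: power_mult_distrib algebra_simps)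
qed

lemma post_risk_le:
  fixes a f0 :: "nat \<Rightarrow> real" and \<psi> :: "nat \<Rightarrow> real \<Rightarrow> real" and \<rho> \<alpha> \<beta> p c1 K CR :: real and n :: nat
  assumes c1: "c1 > 0" and a_ge: "\<And>k. k \<ge> 1 \<Longrightarrow> c1 * real k powr (-p) \<le> a k"
    and \<rho>: "\<rho> > 0" and \<alpha>: "\<alpha> > 0" and \<beta>: "\<beta> > 0" and p: "p > 0" and n: "n \<ge> 1"
    and x: "\<rho>\<^sup>2 * real n \<ge> 1" and f0: "inS \<beta> f0" and K: "Snorm \<beta> f0 \<le> K"
    and aliasing: "\<And>k. k \<in> {1..<n} \<Longrightarrow> \<bar>Udata a \<psi> n f0 (\<lambda>_. 0) k - a k * f0 k\<bar> \<le> CR * real n powr (-(p + \<beta>))"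
    and \<beta>p: "\<beta> + p > 1 / 2"
  shows "post_risk a \<psi> (prior_var \<rho> \<alpha>) n f0
    \<le> (2 * (max 1 (1 / c1\<^sup>2))\<^sup>2 * K\<^sup>2 + (2 * CR\<^sup>2 + 2) * (1 / c1\<^sup>2 + 2 powr (2 * \<alpha>) / (2 * \<alpha>)))
       * (contraction_rate \<alpha> \<beta> p \<rho> n)\<^sup>2"
proof -
  define E where "E = contraction_rate \<alpha> \<beta> p \<rho> n"
  have "(\<Sum>k\<in>{1..<n}. post_var a (prior_var \<rho> \<alpha>) n k)
      \<le> (1 / c1\<^sup>2 + 2 powr (2 * \<alpha>) / (2 * \<alpha>)) * (\<rho> * (\<rho>\<^sup>2 * real n) powr (- (\<alpha> / (2 * \<alpha> + 2 * p + 1))))\<^sup>2"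
    by (rule sum_post_var_le[OF c1 a_ge \<rho> \<alpha> p n x])
  also have "\<dots> \<le> (1 / c1\<^sup>2 + 2 powr (2 * \<alpha>) / (2 * \<alpha>)) * E\<^sup>2"
    unfolding E_def contraction_rate_def using \<rho> \<alpha> by (intro mult_left_mono power_mono) auto
  finally have variance: "(\<Sum>k\<in>{1..<n}. post_var a (prior_var \<rho> \<alpha>) n k) \<le> \<dots>" .
  have "post_risk a \<psi> (prior_var \<rho> \<alpha>) n f0
      \<le> 2 * ((max 1 (1 / c1\<^sup>2) * E)\<^sup>2 * K\<^sup>2)
        + (2 * real n * (CR * real n powr (-(p + \<beta>)))\<^sup>2 + 2) * ((1 / c1\<^sup>2 + 2 powr (2 * \<alpha>) / (2 * \<alpha>)) * E\<^sup>2)"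
    using post_risk_le_bias_variance[OF _ n aliasing, of "prior_var \<rho> \<alpha>"]
      shrinkage_bias_le[OF c1 a_ge \<rho> \<alpha> \<beta> p n x f0 K] variance
    unfolding E_def by (fastforce simp: prior_var_def power_divide intro: order_trans add_mono mult_left_mono)
  also have "\<dots> \<le> 2 * ((max 1 (1 / c1\<^sup>2) * E)\<^sup>2 * K\<^sup>2)
      + (2 * CR\<^sup>2 + 2) * ((1 / c1\<^sup>2 + 2 powr (2 * \<alpha>) / (2 * \<alpha>)) * E\<^sup>2)"
    using mult_powr_neg_square_le[OF n, of "p + \<beta>" CR] \<beta>p \<alpha> by (intro add_left_mono mult_right_mono) auto
  also have "\<dots> = (2 * (max 1 (1 / c1\<^sup>2))\<^sup>2 * K\<^sup>2
      + (2 * CR\<^sup>2 + 2) * (1 / c1\<^sup>2 + 2 powr (2 * \<alpha>) / (2 * \<alpha>))) * E\<^sup>2"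
    by (simp add: power_mult_distrib algebra_simps)
  finally show ?thesis unfolding E_def .
qed

section \<open>The rate in special regimes\<close>

lemma contraction_rate_rho_one:
  assumes "\<alpha> > 0" "p > 0"
  shows "contraction_rate \<alpha> \<beta> p 1 n = real n powr (- (min \<alpha> \<beta> / (2 * \<alpha> + 2 * p + 1)))"
proof (cases "n = 0")
  case False
  define D where "D = 2 * \<alpha> + 2 * p + 1"
  have D: "D > 0" "\<alpha> / D < 1" unfolding D_def using assms by auto
  have n: "real n \<ge> 1" using False by simp
  have "min (min (\<beta> / D) 1) (\<alpha> / D) = min (\<beta> / D) (\<alpha> / D)" using D(2) by (auto simp: min_def)
  also have "\<dots> = min \<alpha> \<beta> / D" using D(1) by (auto simp: min_def divide_le_cancel)
  finally have "min (min (\<beta> / D) 1) (\<alpha> / D) = min \<alpha> \<beta> / D" .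
  moreover have "max (real n powr (- u)) (real n powr (- v)) = real n powr (- min u v)" for u v
  proof (cases "u \<le> v")
    case True
    then have "real n powr (- v) \<le> real n powr (- u)" using n by (intro powr_mono) auto
    then show ?thesis using True by (simp add: max_def min_def)
  next
    case False
    then have "real n powr (- u) \<le> real n powr (- v)" using n by (intro powr_mono) auto
    then show ?thesis using False by (simp add: max_def min_def)
  qed
  ultimately show ?thesis unfolding contraction_rate_def D_def by simp
qed (simp add: contraction_rate_def)

lemma powr_le_contraction_rate_of_gt:
  fixes \<rho> \<alpha> \<beta> p :: real and n :: nat
  defines "D \<equiv> 2 * \<alpha> + 2 * p + 1"
  assumes \<rho>: "\<rho> > 0" and \<alpha>: "\<alpha> > 0" and p: "p > 0" and \<beta>: "\<beta> > D" and n: "n \<ge> 1"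
  shows "real n powr (- (D / (2 * D + 2 * p + 1))) \<le> contraction_rate \<alpha> \<beta> p \<rho> n"
proof -
  define \<theta> where "\<theta> = D / (2 * D + 2 * p + 1)"
  define x where "x = \<rho>\<^sup>2 * real n"
  have D: "D > 1" unfolding D_def using \<alpha> p by simp
  have nr: "real n \<ge> 1" using n by simp
  have x: "x > 0" unfolding x_def using \<rho> nr by simp
  show ?thesis
  proof (cases "x \<le> real n powr \<theta>")
    case True
    have "real n powr (-\<theta>) = (real n powr \<theta>) powr (-1)" using nr by (simp add: powr_powr powr_minus_divide)
    also have "\<dots> \<le> x powr (-1)" using True x by (intro powr_mono2') auto
    also have "\<dots> = x powr (- min (\<beta> / D) 1)" using \<beta> D by simp
    finally show ?thesis unfolding contraction_rate_def x_def \<theta>_def D_def by simp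
  next
    case False
    have "(real n powr (-\<theta>))\<^sup>2 = (real n powr \<theta>) powr ((2 * p + 1) / D) / real n"
    proof -
      define Q where "Q = 2 * D + 2 * p + 1"
      have Q: "Q \<noteq> 0" "D \<noteq> 0" unfolding Q_def using D p by auto
      have "\<theta> * ((2 * p + 1) / D) = (2 * p + 1) / Q" unfolding \<theta>_def Q_def[symmetric] using Q by simp
      also have "\<dots> = 1 + (-\<theta> + -\<theta>)" unfolding \<theta>_def Q_def[symmetric] using Q
        by (simp add: field_simps) (simp add: Q_def)
      finally have "\<theta> * ((2 * p + 1) / D) = 1 + (-\<theta> + -\<theta>)" .
      then have "(real n powr \<theta>) powr ((2 * p + 1) / D) = real n powr 1 * (real n powr (-\<theta>) * real n powr (-\<theta>))"
        by (simp only: powr_powr powr_add)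
      then show ?thesis using nr by (simp add: power2_eq_square)
    qed
    also have "\<dots> \<le> x powr ((2 * p + 1) / D) / real n"
      using False nr D p by (intro divide_right_mono powr_mono2) auto
    also have "\<dots> = (\<rho> * x powr (- (\<alpha> / D)))\<^sup>2"
      unfolding x_def D_def by (rule variance_rate_sq_eq[symmetric, OF \<rho> n]) (use \<alpha> p in simp)
    finally have "real n powr (-\<theta>) \<le> \<rho> * x powr (- (\<alpha> / D))"
      by (rule power2_le_imp_le) (use \<rho> in simp)
    then show ?thesis unfolding contraction_rate_def x_def \<theta>_def D_def by simp
  qed
qed

lemma powr_smallo_contraction_rate:
  fixes \<rho> :: "nat \<Rightarrow> real" and \<alpha> \<beta> p :: real
  assumes \<rho>: "\<And>n. \<rho> n > 0" and \<alpha>: "\<alpha> > 0" and p: "p > 0" and \<beta>: "\<beta> > 2 * \<alpha> + 2 * p + 1"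
  shows "(\<lambda>n. real n powr (- (\<beta> / (2 * \<beta> + 2 * p + 1)))) \<in> o(\<lambda>n. contraction_rate \<alpha> \<beta> p (\<rho> n) n)"
proof (rule landau_o.smallI)
  fix c :: real assume c: "c > 0"
  define D where "D = 2 * \<alpha> + 2 * p + 1"
  define \<theta> where "\<theta> = D / (2 * D + 2 * p + 1)"
  have D: "D > 1" unfolding D_def using \<alpha> p by simp
  have "D * (2 * \<beta> + 2 * p + 1) < \<beta> * (2 * D + 2 * p + 1)"
    using mult_strict_right_mono[of D \<beta> "1 + 2 * p"] \<beta> p unfolding D_def by (simp add: algebra_simps)
  moreover have "2 * D + 2 * p + 1 > 0" "2 * \<beta> + 2 * p + 1 > 0" using D p \<beta> \<alpha> by auto
  ultimately have "\<theta> < \<beta> / (2 * \<beta> + 2 * p + 1)"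
    unfolding \<theta>_def by (simp add: divide_less_eq less_divide_eq mult.commute)
  then have "((\<lambda>n. real n powr (\<theta> - \<beta> / (2 * \<beta> + 2 * p + 1))) \<longlongrightarrow> 0) sequentially"
    by (intro tendsto_neg_powr filterlim_real_sequentially) auto
  then have "eventually (\<lambda>n. real n powr (\<theta> - \<beta> / (2 * \<beta> + 2 * p + 1)) < c) sequentially"
    using c by (rule order_tendstoD)
  then show "eventually (\<lambda>n. norm (real n powr (- (\<beta> / (2 * \<beta> + 2 * p + 1))))
      \<le> c * norm (contraction_rate \<alpha> \<beta> p (\<rho> n) n)) sequentially"
    using eventually_ge_at_top[of "1::nat"]
  proof eventually_elim
    case (elim n)
    have lower: "real n powr (-\<theta>) \<le> contraction_rate \<alpha> \<beta> p (\<rho> n) n"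
      unfolding \<theta>_def D_def by (rule powr_le_contraction_rate_of_gt) (use \<rho> \<alpha> p \<beta> elim(2) in auto)
    have "real n powr (- (\<beta> / (2 * \<beta> + 2 * p + 1)))
        = real n powr (\<theta> - \<beta> / (2 * \<beta> + 2 * p + 1)) * real n powr (-\<theta>)"
      using elim(2) by (simp add: powr_add[symmetric])
    also have "\<dots> \<le> c * contraction_rate \<alpha> \<beta> p (\<rho> n) n"
      using elim(1) lower c by (intro mult_mono) auto
    finally show ?case using order_trans[OF powr_ge_zero lower] by simp
  qed
qed

lemma power2_mult_powr:
  fixes z w t :: real
  assumes "z > 0" and "w > 0"
  shows "(z\<^sup>2 * w) powr t = z powr (2 * t) * w powr t"
proof -
  have "z\<^sup>2 = z powr 2" using assms by (simp add: powr_numeral)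
  then have "(z\<^sup>2) powr t = z powr (2 * t)" by (simp add: powr_powr)
  then show ?thesis using assms by (simp add: powr_mult)
qed

lemma square_mult_between_powr:
  fixes \<rho> c C \<gamma> :: real and n :: nat
  assumes n: "n \<ge> 1" and c: "c > 0"
    and lower: "c * real n powr \<gamma> \<le> \<rho>" and upper: "\<rho> \<le> C * real n powr \<gamma>"
  shows "c\<^sup>2 * real n powr (2 * \<gamma> + 1) \<le> \<rho>\<^sup>2 * real n" and "\<rho>\<^sup>2 * real n \<le> C\<^sup>2 * real n powr (2 * \<gamma> + 1)"
proof -
  have nr: "real n \<ge> 1" using n by simp
  have square: "(d * real n powr \<gamma>)\<^sup>2 * real n = d\<^sup>2 * real n powr (2 * \<gamma> + 1)" for d
    using nr by (simp add: power_mult_distrib powr_realpow[symmetric] powr_powr powr_add mult.commute)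
  have "0 \<le> c * real n powr \<gamma>" using c by simp
  then show "c\<^sup>2 * real n powr (2 * \<gamma> + 1) \<le> \<rho>\<^sup>2 * real n"
    using lower unfolding square[symmetric] by (intro mult_right_mono power_mono) auto
  show "\<rho>\<^sup>2 * real n \<le> C\<^sup>2 * real n powr (2 * \<gamma> + 1)"
    using lower upper \<open>0 \<le> c * real n powr \<gamma>\<close> unfolding square[symmetric]
    by (intro mult_right_mono power_mono) auto
qed

text \<open>With \<open>\<rho> \<asymp> n\<^sup>\<gamma>\<close>, \<open>\<gamma> = (\<alpha> - \<beta>) / (2\<beta> + 2p + 1)\<close>, one has \<open>\<rho>\<^sup>2 n \<asymp> n\<^bsup>D/(2\<beta>+2p+1)\<^esup>\<close>, which balances
  both terms of the rate at \<open>n\<^bsup>-\<beta>/(2\<beta>+2p+1)\<^esup>\<close>.\<close>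
lemma contraction_rate_between:
  fixes \<rho> \<alpha> \<beta> p c C :: real and n :: nat
  defines "D \<equiv> 2 * \<alpha> + 2 * p + 1" and "B \<equiv> 2 * \<beta> + 2 * p + 1"
  assumes n: "n \<ge> 1" and \<alpha>: "\<alpha> > 0" and \<beta>: "\<beta> > 0" and p: "p > 0" and \<beta>D: "\<beta> \<le> D"
    and c: "c > 0" and C: "C > 0"
    and lower: "c * real n powr ((\<alpha> - \<beta>) / B) \<le> \<rho>" and upper: "\<rho> \<le> C * real n powr ((\<alpha> - \<beta>) / B)"
  shows "C powr (-(2 * (\<beta> / D))) * real n powr (-(\<beta> / B)) \<le> contraction_rate \<alpha> \<beta> p \<rho> n"
    and "contraction_rate \<alpha> \<beta> p \<rho> n
      \<le> max (c powr (-(2 * (\<beta> / D)))) (C * c powr (-(2 * (\<alpha> / D)))) * real n powr (-(\<beta> / B))"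
proof -
  define u where "u = real n powr ((\<alpha> - \<beta>) / B)"
  define w where "w = real n powr (D / B)"
  define x where "x = \<rho>\<^sup>2 * real n"
  define N where "N = real n powr (-(\<beta> / B))"
  have nr: "real n \<ge> 1" using n by simp
  have D0: "D > 0" and B0: "B > 0" unfolding D_def B_def using \<alpha> \<beta> p by auto
  have u: "u > 0" and w: "w > 0" and N: "N > 0" unfolding u_def w_def N_def using nr by auto
  have "0 < c * u" using c u by simp
  then have \<rho>: "\<rho> > 0" using lower unfolding u_def by linarith
  have "2 * ((\<alpha> - \<beta>) / B) + 1 = D / B" unfolding D_def B_def using B0 B_def by (simp add: field_simps)
  then have x: "c\<^sup>2 * w \<le> x" "x \<le> C\<^sup>2 * w"
    using square_mult_between_powr[OF n c lower upper]
    unfolding u_def w_def x_def by auto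
  have "0 < c\<^sup>2 * w" using c w by simp
  then have x_pos: "x > 0" using x(1) by linarith
  have wb: "w powr (-(\<beta> / D)) = N" unfolding w_def N_def using D0 B0 by (simp add: powr_powr)
  have wa: "u * w powr (-(\<alpha> / D)) = N"
  proof -
    have "(\<alpha> - \<beta>) / B + D / B * (-(\<alpha> / D)) = -(\<beta> / B)" using D0 B0 by (simp add: field_simps)
    then show ?thesis unfolding u_def w_def N_def by (simp add: powr_powr powr_add[symmetric])
  qed
  have rate: "contraction_rate \<alpha> \<beta> p \<rho> n = max (x powr (-(\<beta> / D))) (\<rho> * x powr (-(\<alpha> / D)))"
    using \<beta>D D0 unfolding contraction_rate_def x_def D_def by simp
  have "C powr (-(2 * (\<beta> / D))) * N = (C\<^sup>2 * w) powr (-(\<beta> / D))"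
    unfolding wb[symmetric] using C w by (simp add: power2_mult_powr)
  also have "\<dots> \<le> x powr (-(\<beta> / D))" using x c w \<beta> D0 by (intro powr_mono2') (auto simp: x_pos)
  finally show "C powr (-(2 * (\<beta> / D))) * real n powr (-(\<beta> / B)) \<le> contraction_rate \<alpha> \<beta> p \<rho> n"
    unfolding rate N_def by simp
  have "x powr (-(\<beta> / D)) \<le> (c\<^sup>2 * w) powr (-(\<beta> / D))" using x c w \<beta> D0 by (intro powr_mono2') (auto simp: x_pos)
  also have "\<dots> = c powr (-(2 * (\<beta> / D))) * N" unfolding wb[symmetric] using c w by (simp add: power2_mult_powr)
  finally have first: "x powr (-(\<beta> / D)) \<le> c powr (-(2 * (\<beta> / D))) * N" .
  have "x powr (-(\<alpha> / D)) \<le> (c\<^sup>2 * w) powr (-(\<alpha> / D))" using x c w \<alpha> D0 by (intro powr_mono2') (auto simp: x_pos)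
  also have "\<dots> = c powr (-(2 * (\<alpha> / D))) * w powr (-(\<alpha> / D))" using c w by (simp add: power2_mult_powr)
  finally have "\<rho> * x powr (-(\<alpha> / D)) \<le> (C * u) * (c powr (-(2 * (\<alpha> / D))) * w powr (-(\<alpha> / D)))"
    using upper \<rho> unfolding u_def by (intro mult_mono) auto
  also have "\<dots> = C * c powr (-(2 * (\<alpha> / D))) * N" unfolding wa[symmetric] by (simp add: algebra_simps)
  finally have second: "\<rho> * x powr (-(\<alpha> / D)) \<le> C * c powr (-(2 * (\<alpha> / D))) * N" .
  show "contraction_rate \<alpha> \<beta> p \<rho> n
      \<le> max (c powr (-(2 * (\<beta> / D)))) (C * c powr (-(2 * (\<alpha> / D)))) * real n powr (-(\<beta> / B))"
  proof -
    have "c powr (-(2 * (\<beta> / D))) * N \<le> max (c powr (-(2 * (\<beta> / D)))) (C * c powr (-(2 * (\<alpha> / D)))) * N"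
      "C * c powr (-(2 * (\<alpha> / D))) * N \<le> max (c powr (-(2 * (\<beta> / D)))) (C * c powr (-(2 * (\<alpha> / D)))) * N"
      using N by (intro mult_right_mono; simp)+
    then show ?thesis using first second unfolding rate N_def[symmetric] by simp
  qed
qed

lemma contraction_rate_bigtheta:
  fixes \<rho> :: "nat \<Rightarrow> real" and \<alpha> \<beta> p :: real
  assumes \<rho>: "\<And>n. \<rho> n > 0" and \<alpha>: "\<alpha> > 0" and \<beta>: "\<beta> > 0" and p: "p > 0"
    and \<beta>D: "\<beta> \<le> 2 * \<alpha> + 2 * p + 1"
    and theta: "\<rho> \<in> \<Theta>(\<lambda>n. real n powr ((\<alpha> - \<beta>) / (2 * \<beta> + 2 * p + 1)))"
  shows "(\<lambda>n. contraction_rate \<alpha> \<beta> p (\<rho> n) n) \<in> \<Theta>(\<lambda>n. real n powr (- (\<beta> / (2 * \<beta> + 2 * p + 1))))"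
proof -
  define D where "D = 2 * \<alpha> + 2 * p + 1"
  define \<gamma> where "\<gamma> = (\<alpha> - \<beta>) / (2 * \<beta> + 2 * p + 1)"
  from bigthetaD1[OF theta] obtain C where C: "C > 0"
    and upper: "eventually (\<lambda>n. norm (\<rho> n) \<le> C * norm (real n powr \<gamma>)) at_top"
    unfolding \<gamma>_def by (elim landau_o.bigE) auto
  from bigthetaD2[OF theta] obtain c where c: "c > 0"
    and lower: "eventually (\<lambda>n. norm (\<rho> n) \<ge> c * norm (real n powr \<gamma>)) at_top"
    unfolding \<gamma>_def by (elim landau_omega.bigE) auto
  show ?thesis
  proof (rule bigthetaI')
    show "C powr (-(2 * (\<beta> / D))) > 0" "max (c powr (-(2 * (\<beta> / D)))) (C * c powr (-(2 * (\<alpha> / D)))) > 0"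
      using c C by (auto simp: less_max_iff_disj)
    show "eventually (\<lambda>n. C powr (-(2 * (\<beta> / D))) * norm (real n powr (- (\<beta> / (2 * \<beta> + 2 * p + 1))))
        \<le> norm (contraction_rate \<alpha> \<beta> p (\<rho> n) n)
      \<and> norm (contraction_rate \<alpha> \<beta> p (\<rho> n) n)
        \<le> max (c powr (-(2 * (\<beta> / D)))) (C * c powr (-(2 * (\<alpha> / D))))
          * norm (real n powr (- (\<beta> / (2 * \<beta> + 2 * p + 1))))) at_top"
      using upper lower eventually_ge_at_top[of "1::nat"]
    proof eventually_elim
      case (elim n)
      have "c * real n powr \<gamma> \<le> \<rho> n" "\<rho> n \<le> C * real n powr \<gamma>" using elim \<rho>[of n] by auto
      note bounds = contraction_rate_between[OF elim(3) \<alpha> \<beta> p \<beta>D c C this[unfolded \<gamma>_def]]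
      then show ?case using order_trans[OF _ bounds(1)] C unfolding D_def by simp
    qed
  qed
qed

section \<open>Posterior contraction\<close>

lemma bigtheta_obtain_bounds:
  fixes a g :: "nat \<Rightarrow> real"
  assumes theta: "a \<in> \<Theta>(g)" and a_pos: "\<And>k. k \<ge> 1 \<Longrightarrow> a k > 0" and g_pos: "\<And>k. k \<ge> 1 \<Longrightarrow> g k > 0"
  obtains c1 c2 where "c1 > 0" "c2 > 0" "\<And>k. k \<ge> 1 \<Longrightarrow> c1 * g k \<le> a k \<and> a k \<le> c2 * g k"
proof -
  from bigthetaD1[OF theta] obtain c where c: "c > 0"
    and ev1: "eventually (\<lambda>k. norm (a k) \<le> c * norm (g k)) at_top"
    by (elim landau_o.bigE) auto
  from bigthetaD2[OF theta] obtain c' where c': "c' > 0"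
    and ev2: "eventually (\<lambda>k. norm (a k) \<ge> c' * norm (g k)) at_top"
    by (elim landau_omega.bigE) auto
  from eventually_conj[OF ev1 ev2] obtain N where N: "\<And>k. k \<ge> N \<Longrightarrow>
      norm (a k) \<le> c * norm (g k) \<and> norm (a k) \<ge> c' * norm (g k)"
    unfolding eventually_at_top_linorder by blast
  define S where "S = (\<lambda>k. a k / g k) ` {1..max N 1}"
  have S: "finite S" "S \<noteq> {}" "\<And>x. x \<in> S \<Longrightarrow> x > 0"
    unfolding S_def using a_pos g_pos by auto
  show ?thesis
  proof (rule that[of "min c' (Min S)" "max c (Max S)"])
    show "min c' (Min S) > 0" "max c (Max S) > 0" using c c' S by auto
    fix k :: nat assume k: "k \<ge> 1"
    have gk: "g k > 0" using g_pos[OF k] .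
    have widen: "min c' (Min S) * g k \<le> c' * g k" "min c' (Min S) * g k \<le> Min S * g k"
      "c * g k \<le> max c (Max S) * g k" "Max S * g k \<le> max c (Max S) * g k"
      using gk by (auto intro: mult_right_mono)
    show "min c' (Min S) * g k \<le> a k \<and> a k \<le> max c (Max S) * g k"
    proof (cases "k \<ge> N")
      case True
      then have "c' * g k \<le> a k" "a k \<le> c * g k" using N[of k] a_pos[OF k] gk by auto
      with widen show ?thesis by linarith
    next
      case False
      then have "a k / g k \<in> S" unfolding S_def using k by auto
      then have "Min S \<le> a k / g k" "a k / g k \<le> Max S" using S by auto
      then have "Min S * g k \<le> a k" "a k \<le> Max S * g k" using gk by (auto simp: field_simps)
      with widen show ?thesis by linarith
    qed
  qed
qed

lemma exp_post_prob_le_contraction_rate: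
  fixes a :: "nat \<Rightarrow> real" and \<psi> :: "nat \<Rightarrow> real \<Rightarrow> real" and kb :: "nat \<Rightarrow> nat \<Rightarrow> bool \<Rightarrow> nat"
    and Mc p \<alpha> \<beta> K :: real
  assumes a_pos: "\<And>k. k \<ge> 1 \<Longrightarrow> a k > 0"
    and a_rate: "a \<in> \<Theta>(\<lambda>k. real k powr (- p))"
    and orth: "\<And>n j k. n \<ge> 2 \<Longrightarrow> j \<in> {1..n-1} \<Longrightarrow> k \<in> {1..n-1} \<Longrightarrow>
                 dip n (\<psi> j) (\<psi> k) = (if j = k then 1 else 0)"
    and aliasing: "\<forall>n\<ge>2. \<forall>k\<in>{1..n-1}. \<forall>l\<ge>1.
                 kb n k (even l) < n \<and>
                 0 < \<bar>dip n (\<psi> (l * n + kb n k (even l))) (\<psi> k)\<bar> \<and>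
                 \<bar>dip n (\<psi> (l * n + kb n k (even l))) (\<psi> k)\<bar> < Mc \<and>
                 (\<forall>j\<in>{l * n..<(l + 1) * n}. j \<noteq> l * n + kb n k (even l) \<longrightarrow>
                      dip n (\<psi> j) (\<psi> k) = 0)"
    and A_series: "\<And>f x. inS \<beta> f \<Longrightarrow> x \<in> {0..1} \<Longrightarrow>
                 summable (\<lambda>j. a (Suc j) * f (Suc j) * \<psi> (Suc j) x)"
    and p: "p > 0" and \<alpha>: "\<alpha> > 0" and \<beta>: "\<beta> > 0" and \<beta>p: "\<beta> + p > 1 / 2"
  obtains C where "\<And>n \<rho> f0 r. n \<ge> 2 \<Longrightarrow> \<rho> > 0 \<Longrightarrow> \<rho>\<^sup>2 * real n \<ge> 1 \<Longrightarrow> inS \<beta> f0 \<Longrightarrow> Snorm \<beta> f0 \<le> K \<Longrightarrow>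
    r > 0 \<Longrightarrow> exp_post_prob a \<psi> (prior_var \<rho> \<alpha>) n f0 r \<le> C * (contraction_rate \<alpha> \<beta> p \<rho> n)\<^sup>2 / r\<^sup>2"
proof -
  obtain c1 c2 where c1: "c1 > 0" and bounds: "\<And>k. k \<ge> 1 \<Longrightarrow> c1 * real k powr (-p) \<le> a k \<and> a k \<le> c2 * real k powr (-p)"
    by (rule bigtheta_obtain_bounds[OF a_rate a_pos]) auto
  define CR where "CR = Mc / 2 * (K\<^sup>2 + c2\<^sup>2 * (\<Sum>l. real (Suc l) powr (-(2 * p + 2 * \<beta>))))"
  define C where "C = 2 * (max 1 (1 / c1\<^sup>2))\<^sup>2 * K\<^sup>2 + (2 * CR\<^sup>2 + 2) * (1 / c1\<^sup>2 + 2 powr (2 * \<alpha>) / (2 * \<alpha>))"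
  show ?thesis
  proof (rule that)
    fix n :: nat and \<rho> r :: real and f0 :: "nat \<Rightarrow> real"
    assume n: "n \<ge> 2" and \<rho>: "\<rho> > 0" and x: "\<rho>\<^sup>2 * real n \<ge> 1"
      and f0: "inS \<beta> f0" and K: "Snorm \<beta> f0 \<le> K" and r: "r > 0"
    have block: "{1..<n} = {1..n-1}" using n by auto
    have "\<bar>Udata a \<psi> n f0 (\<lambda>_. 0) k - a k * f0 k\<bar> \<le> CR * real n powr (-(p + \<beta>))" if k: "k \<in> {1..<n}" for k
      unfolding CR_def
    proof (rule aliasing_error_le[where J="\<lambda>l. l * n + kb n k (even l)"])
      show "\<And>l. 1 \<le> l \<Longrightarrow> l * n + kb n k (even l) \<in> {l * n..<(l + 1) * n}"
        "\<And>l. 1 \<le> l \<Longrightarrow> \<bar>dip n (\<psi> (l * n + kb n k (even l))) (\<psi> k)\<bar> \<le> Mc"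
        "\<And>l j. 1 \<le> l \<Longrightarrow> j \<in> {l * n..<(l + 1) * n} \<Longrightarrow> j \<noteq> l * n + kb n k (even l) \<Longrightarrow> dip n (\<psi> j) (\<psi> k) = 0"
        using aliasing n k unfolding block by fastforce+
      show "\<And>j. j \<in> {1..<n} \<Longrightarrow> dip n (\<psi> j) (\<psi> k) = (if j = k then 1 else 0)"
        using orth[OF n] k unfolding block by blast
      show "\<And>j. 1 \<le> j \<Longrightarrow> \<bar>a j\<bar> \<le> c2 * real j powr (-p)"
        using bounds a_pos by (metis abs_of_pos)
      show "infsum (\<lambda>k. (f0 k)\<^sup>2 * real k powr (2 * \<beta>)) {1..} \<le> K\<^sup>2"
        by (rule Snorm_le_imp_infsum_le[OF K])
    qed (use n k f0 A_series \<beta>p in \<open>auto simp: inS_def\<close>)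
    then have "post_risk a \<psi> (prior_var \<rho> \<alpha>) n f0 \<le> C * (contraction_rate \<alpha> \<beta> p \<rho> n)\<^sup>2"
      unfolding C_def using n bounds
      by (intro post_risk_le[OF c1 _ \<rho> \<alpha> \<beta> p _ x f0 K _ \<beta>p]) auto
    moreover have "exp_post_prob a \<psi> (prior_var \<rho> \<alpha>) n f0 r \<le> post_risk a \<psi> (prior_var \<rho> \<alpha>) n f0 / r\<^sup>2"
      using n r f0 orth[OF n] unfolding block
      by (intro exp_post_prob_le_post_risk) (auto simp: inS_def prior_var_def)
    ultimately show "exp_post_prob a \<psi> (prior_var \<rho> \<alpha>) n f0 r \<le> C * (contraction_rate \<alpha> \<beta> p \<rho> n)\<^sup>2 / r\<^sup>2"
      by (meson divide_right_mono order_trans zero_le_power2)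
  qed
qed

lemma SUP_nonneg_le:
  fixes f :: "'a \<Rightarrow> real"
  assumes "x0 \<in> S" and "\<And>x. x \<in> S \<Longrightarrow> 0 \<le> f x" and "\<And>x. x \<in> S \<Longrightarrow> f x \<le> B"
  shows "0 \<le> (SUP x\<in>S. f x) \<and> (SUP x\<in>S. f x) \<le> B"
proof
  have "bdd_above (f ` S)" using assms(3) by (intro bdd_aboveI2) auto
  then show "0 \<le> (SUP x\<in>S. f x)" using assms(1,2) by (meson cSUP_upper order_trans)
  show "(SUP x\<in>S. f x) \<le> B" using assms(1,3) by (intro cSUP_least) auto
qed

lemma posterior_contraction:
  fixes a :: "nat \<Rightarrow> real" and \<psi> :: "nat \<Rightarrow> real \<Rightarrow> real" and Mc p \<alpha> \<beta> K :: real and \<rho> Mn :: "nat \<Rightarrow> real"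
  assumes a_pos: "\<And>k. k \<ge> 1 \<Longrightarrow> a k > 0"
    and a_rate: "a \<in> \<Theta>(\<lambda>k. real k powr (- p))"
    and orth: "\<And>n j k. n \<ge> 2 \<Longrightarrow> j \<in> {1..n-1} \<Longrightarrow> k \<in> {1..n-1} \<Longrightarrow>
                 dip n (\<psi> j) (\<psi> k) = (if j = k then 1 else 0)"
    and aliasing: "\<exists>kb :: nat \<Rightarrow> nat \<Rightarrow> bool \<Rightarrow> nat. \<forall>n\<ge>2. \<forall>k\<in>{1..n-1}. \<forall>l\<ge>1.
                 kb n k (even l) < n \<and>
                 0 < \<bar>dip n (\<psi> (l * n + kb n k (even l))) (\<psi> k)\<bar> \<and>
                 \<bar>dip n (\<psi> (l * n + kb n k (even l))) (\<psi> k)\<bar> < Mc \<and>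
                 (\<forall>j\<in>{l * n..<(l + 1) * n}. j \<noteq> l * n + kb n k (even l) \<longrightarrow>
                      dip n (\<psi> j) (\<psi> k) = 0)"
    and A_series: "\<And>f x. inS \<beta> f \<Longrightarrow> x \<in> {0..1} \<Longrightarrow>
                 summable (\<lambda>j. a (Suc j) * f (Suc j) * \<psi> (Suc j) x)"
    and p: "p > 0" and \<alpha>: "\<alpha> > 0" and \<beta>: "\<beta> > 0" and \<beta>p: "\<beta> + p > 1 / 2"
    and \<rho>: "\<And>n. \<rho> n > 0" and \<rho>_n: "filterlim (\<lambda>n. (\<rho> n)\<^sup>2 * real n) at_top sequentially"
    and K: "K > 0" and Mn: "filterlim Mn at_top sequentially"
  shows "(\<lambda>n. SUP f0 \<in> {f0. inS \<beta> f0 \<and> Snorm \<beta> f0 \<le> K}.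
    exp_post_prob a \<psi> (prior_var (\<rho> n) \<alpha>) n f0 (Mn n * contraction_rate \<alpha> \<beta> p (\<rho> n) n)) \<longlonglongrightarrow> 0"
proof -
  obtain kb where kb: "\<forall>n\<ge>2. \<forall>k\<in>{1..n-1}. \<forall>l\<ge>1.
      kb n k (even l) < n \<and> 0 < \<bar>dip n (\<psi> (l * n + kb n k (even l))) (\<psi> k)\<bar> \<and>
      \<bar>dip n (\<psi> (l * n + kb n k (even l))) (\<psi> k)\<bar> < Mc \<and>
      (\<forall>j\<in>{l * n..<(l + 1) * n}. j \<noteq> l * n + kb n k (even l) \<longrightarrow> dip n (\<psi> j) (\<psi> k) = 0)"
    using aliasing by blast
  obtain C where C: "\<And>n \<rho> f0 r. n \<ge> 2 \<Longrightarrow> \<rho> > 0 \<Longrightarrow> \<rho>\<^sup>2 * real n \<ge> 1 \<Longrightarrow> inS \<beta> f0 \<Longrightarrow>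
      Snorm \<beta> f0 \<le> K \<Longrightarrow> r > 0 \<Longrightarrow>
      exp_post_prob a \<psi> (prior_var \<rho> \<alpha>) n f0 r \<le> C * (contraction_rate \<alpha> \<beta> p \<rho> n)\<^sup>2 / r\<^sup>2"
    using exp_post_prob_le_contraction_rate[where K=K and \<beta>=\<beta>, OF a_pos a_rate orth kb A_series p \<alpha> \<beta> \<beta>p]
    by blast
  have "eventually (\<lambda>n. (\<rho> n)\<^sup>2 * real n \<ge> 1) sequentially" "eventually (\<lambda>n. Mn n \<ge> 1) sequentially"
    using \<rho>_n Mn by (simp_all add: filterlim_at_top)
  then have bounds: "eventually (\<lambda>n. 0 \<le> (SUP f0 \<in> {f0. inS \<beta> f0 \<and> Snorm \<beta> f0 \<le> K}.
      exp_post_prob a \<psi> (prior_var (\<rho> n) \<alpha>) n f0 (Mn n * contraction_rate \<alpha> \<beta> p (\<rho> n) n))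
    \<and> (SUP f0 \<in> {f0. inS \<beta> f0 \<and> Snorm \<beta> f0 \<le> K}.
      exp_post_prob a \<psi> (prior_var (\<rho> n) \<alpha>) n f0 (Mn n * contraction_rate \<alpha> \<beta> p (\<rho> n) n))
      \<le> C / (Mn n)\<^sup>2) sequentially"
    using eventually_ge_at_top[of "2::nat"]
  proof eventually_elim
    case (elim n)
    have rate: "contraction_rate \<alpha> \<beta> p (\<rho> n) n > 0"
      using \<rho>[of n] elim unfolding contraction_rate_def by (auto simp: less_max_iff_disj)
    show ?case
    proof (rule SUP_nonneg_le)
      show "(\<lambda>_. 0) \<in> {f0. inS \<beta> f0 \<and> Snorm \<beta> f0 \<le> K}" using K by (simp add: inS_def Snorm_def)
      show "0 \<le> exp_post_prob a \<psi> (prior_var (\<rho> n) \<alpha>) n f0 (Mn n * contraction_rate \<alpha> \<beta> p (\<rho> n) n)" for f0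
        unfolding exp_post_prob_def by (rule Bochner_Integration.integral_nonneg) simp
      fix f0 assume "f0 \<in> {f0. inS \<beta> f0 \<and> Snorm \<beta> f0 \<le> K}"
      then have "exp_post_prob a \<psi> (prior_var (\<rho> n) \<alpha>) n f0 (Mn n * contraction_rate \<alpha> \<beta> p (\<rho> n) n)
          \<le> C * (contraction_rate \<alpha> \<beta> p (\<rho> n) n)\<^sup>2 / (Mn n * contraction_rate \<alpha> \<beta> p (\<rho> n) n)\<^sup>2"
        using elim \<rho> rate by (intro C) auto
      also have "\<dots> = C / (Mn n)\<^sup>2" using rate elim by (simp add: power_mult_distrib)
      finally show "exp_post_prob a \<psi> (prior_var (\<rho> n) \<alpha>) n f0 (Mn n * contraction_rate \<alpha> \<beta> p (\<rho> n) n)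
          \<le> C / (Mn n)\<^sup>2" .
    qed
  qed
  have lim: "(\<lambda>n. C / (Mn n)\<^sup>2) \<longlonglongrightarrow> 0"
    by (intro tendsto_divide_0[OF tendsto_const] filterlim_at_top_imp_at_infinity filterlim_pow_at_top Mn) simp
  show ?thesis
    by (rule tendsto_sandwich[OF _ _ tendsto_const lim]) (use bounds in \<open>auto elim: eventually_mono\<close>)
qed

theorem mainTheorem2:
  fixes a :: "nat \<Rightarrow> real" and \<psi> :: "nat \<Rightarrow> real \<Rightarrow> real" and Mc :: real
    and p \<alpha> \<beta> K :: real and \<rho> Mn :: "nat \<Rightarrow> real"
  assumes a_pos: "\<And>k. k \<ge> 1 \<Longrightarrow> a k > 0"
    and a_rate: "a \<in> \<Theta>(\<lambda>k. real k powr (- p))"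
    and p_pos: "p > 0"
    and orth: "\<And>n j k. n \<ge> 2 \<Longrightarrow> j \<in> {1..n-1} \<Longrightarrow> k \<in> {1..n-1} \<Longrightarrow>
                 dip n (\<psi> j) (\<psi> k) = (if j = k then 1 else 0)"
    and aliasing: "\<exists>kb :: nat \<Rightarrow> nat \<Rightarrow> bool \<Rightarrow> nat. \<forall>n\<ge>2. \<forall>k\<in>{1..n-1}. \<forall>l\<ge>1.
                 kb n k (even l) < n \<and>
                 0 < \<bar>dip n (\<psi> (l * n + kb n k (even l))) (\<psi> k)\<bar> \<and>
                 \<bar>dip n (\<psi> (l * n + kb n k (even l))) (\<psi> k)\<bar> < Mc \<and>
                 (\<forall>j\<in>{l * n..<(l + 1) * n}. j \<noteq> l * n + kb n k (even l) \<longrightarrow>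
                      dip n (\<psi> j) (\<psi> k) = 0)"
    and A_series: "\<And>f x. inS \<beta> f \<Longrightarrow> x \<in> {0..1} \<Longrightarrow>
                 summable (\<lambda>j. a (Suc j) * f (Suc j) * \<psi> (Suc j) x)"
    and beta_pos: "\<beta> > 0" and beta_p: "\<beta> + p > 1 / 2"
    and alpha_pos: "\<alpha> > 0"
    and rho_pos: "\<And>n. \<rho> n > 0"
    and rho_n: "filterlim (\<lambda>n. (\<rho> n)\<^sup>2 * real n) at_top sequentially"
    and K_pos: "K > 0"
    and Mn_inf: "filterlim Mn at_top sequentially"
  defines "lam \<equiv> (\<lambda>n k. (\<rho> n)\<^sup>2 * real k powr (- 1 - 2 * \<alpha>))"
    and "eps \<equiv> (\<lambda>n. max (((\<rho> n)\<^sup>2 * real n) powr (- min (\<beta> / (2 * \<alpha> + 2 * p + 1)) 1))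
                          (\<rho> n * ((\<rho> n)\<^sup>2 * real n) powr (- (\<alpha> / (2 * \<alpha> + 2 * p + 1)))))"
  shows "((\<lambda>n. SUP f0 \<in> {f0. inS \<beta> f0 \<and> Snorm \<beta> f0 \<le> K}.
              exp_post_prob a \<psi> (lam n) n f0 (Mn n * eps n)) \<longlonglongrightarrow> 0)
       \<and> ((\<forall>n. \<rho> n = 1) \<longrightarrow> (\<forall>n. eps n = real n powr (- (min \<alpha> \<beta> / (2 * \<alpha> + 2 * p + 1)))))
       \<and> (\<beta> \<le> 2 * \<alpha> + 2 * p + 1 \<and> \<rho> \<in> \<Theta>(\<lambda>n. real n powr ((\<alpha> - \<beta>) / (2 * \<beta> + 2 * p + 1))) \<longrightarrow>
            eps \<in> \<Theta>(\<lambda>n. real n powr (- (\<beta> / (2 * \<beta> + 2 * p + 1)))))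
       \<and> (\<beta> > 2 * \<alpha> + 2 * p + 1 \<longrightarrow> (\<lambda>n. real n powr (- (\<beta> / (2 * \<beta> + 2 * p + 1)))) \<in> o(eps))"
proof -
  have lam: "lam = (\<lambda>n. prior_var (\<rho> n) \<alpha>)" by (simp add: lam_def prior_var_def fun_eq_iff)
  have rate: "eps = (\<lambda>n. contraction_rate \<alpha> \<beta> p (\<rho> n) n)" by (simp add: eps_def contraction_rate_def fun_eq_iff)
  have "(\<lambda>n. SUP f0 \<in> {f0. inS \<beta> f0 \<and> Snorm \<beta> f0 \<le> K}.
      exp_post_prob a \<psi> (lam n) n f0 (Mn n * eps n)) \<longlonglongrightarrow> 0"
    unfolding lam rate
    by (rule posterior_contraction[OF a_pos a_rate orth aliasing A_series p_pos alpha_pos beta_pos beta_p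
        rho_pos rho_n K_pos Mn_inf])
  moreover have "(\<forall>n. \<rho> n = 1) \<longrightarrow> (\<forall>n. eps n = real n powr (- (min \<alpha> \<beta> / (2 * \<alpha> + 2 * p + 1))))"
    by (simp add: rate contraction_rate_rho_one[OF alpha_pos p_pos])
  moreover have "\<beta> \<le> 2 * \<alpha> + 2 * p + 1 \<and> \<rho> \<in> \<Theta>(\<lambda>n. real n powr ((\<alpha> - \<beta>) / (2 * \<beta> + 2 * p + 1))) \<longrightarrow>
      eps \<in> \<Theta>(\<lambda>n. real n powr (- (\<beta> / (2 * \<beta> + 2 * p + 1))))"
    unfolding rate using contraction_rate_bigtheta[of \<rho> \<alpha> \<beta> p] rho_pos alpha_pos beta_pos p_pos by blast
  moreover have "\<beta> > 2 * \<alpha> + 2 * p + 1 \<longrightarrow> (\<lambda>n. real n powr (- (\<beta> / (2 * \<beta> + 2 * p + 1)))) \<in> o(eps)"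
    unfolding rate using powr_smallo_contraction_rate[of \<rho> \<alpha> p \<beta>] rho_pos alpha_pos p_pos by blast
  ultimately show ?thesis by blast
qed

end
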